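(* Let $\varphi\in\mathcal{A}$ be w.h.i.s. Then, with $\pi:\mathcal{A}\to\mathcal{A}_\varphi$ the projection: every skew-symmetric $3$-derivation of $\mathcal{A}_\varphi$ is zero, so $H^3(\mathcal{A}_\varphi)=\{0\}$; the skew-symmetric $1$-derivations (resp. $2$-derivations) of $\mathcal{A}_\varphi$ are identified with $\{\pi(\vec f)\in\mathcal{A}_\varphi^3\mid\vec f\cdot\vec\nabla\varphi\in\langle\varphi\rangle\}$ (resp. $\{\pi(\vec f)\in\mathcal{A}_\varphi^3\mid\vec f\times\vec\nabla\varphi\in\langle\varphi\rangle\}$); and $H^0(\mathcal{A}_\varphi)\simeq\{\pi(f)\mid\vec\nabla f\times\vec\nabla\varphi\in\langle\varphi\rangle\}$, $H^1(\mathcal{A}_\varphi)\simeq\dfrac{\{\pi(\vec f)\mid\vec f\cdot\vec\nabla\varphi\in\langle\varphi\rangle,\ -\vec\nabla(\vec f\cdot\vec\nabla\varphi)+\mathrm{Div}(\vec f)\vec\nabla\varphi\in\langle\varphi\rangle\}}{\{\pi(\vec\nabla f\times\vec\nabla\varphi)\mid f\in\mathcal{A}\}}$, $H^2(\mathcal{A}_\varphi)\simeq\dfrac{\{\pi(\vec f)\mid\vec f\times\vec\nabla\varphi\in\langle\varphi\rangle\}}{\{\pi(-\vec\nabla(\vec f\cdot\vec\nabla\varphi)+\mathrm{Div}(\vec f)\vec\nabla\varphi)\mid\vec f\in\mathcal{A}^3,\ \vec f\cdot\vec\nabla\varphi\in\langle\varphi\rangle\}}$, where $\langle\varphi\rangle$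 means the ideal (or submodule of $\mathcal{A}^3$) generated by $\varphi$.
   Context: $\mathbf{F}$ is a field of characteristic zero and $\mathcal{A}=\mathbf{F}[x,y,z]$. Elements of $\mathcal{A}^3$ are treated as vector fields: $\vec f\cdot\vec g$, $\vec f\times\vec g$ are the usual inner and cross products, $\vec\nabla f=(\partial f/\partial x,\partial f/\partial y,\partial f/\partial z)$, $\vec\nabla\times$ is the curl and $\mathrm{Div}$ the divergence. Fix positive integers $\varpi_1,\varpi_2,\varpi_3$ without common divisor $>1$ (weights of $x,y,z$). A nonzero polynomial is weight homogeneous of degree $d$ if it is an $\mathbf{F}$-linear combination of monomials $x^ay^bz^c$ with $a\varpi_1+b\varpi_2+c\varpi_3=d$. $\varphi\in\mathcal{A}$ is w.h.i.s. if it is weight homogeneous and $\mathcal{A}_{sing}:=\mathcal{A}/\langle\partial_x\varphi,\partial_y\varphi,\partial_z\varphi\rangle$ is a nonzero finite-dimensional $\mathbf{F}$-vector space. The Poisson bracket $\{\cdot,\cdot\}_\varphi$ on $\mathcal{A}$ is determined by $\{x,y\}_\varphi=\partial_z\varphi$, $\{y,z\}_\varphi=\partial_x\varphi$, $\{z,x\}_\varphi=\partial_y\varphi$; $\varphi$ is a Casimir, so it induces a Poisson bracket $\{\cdot,\cdot\}_{\mathcal{A}_\varphi}$ on $\mathcal{A}_\varphi:=\mathcal{A}/\langle\varphi\rangle$ with $\{\pi(f),\pi(g)\}_{\mathcal{A}_\varphi}=\pi(\{f,g\}_\varphi)$; for $\vec f=(f_1,f_2,f_3)$, $\pi(\vec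 f):=(\pi(f_1),\pi(f_2),\pi(f_3))$. For a Poisson algebra $(\mathcal{B},\{\cdot,\cdot\})$, the Poisson cochains of degree $k$ are the skew-symmetric $k$-derivations $Q:\mathcal{B}^k\to\mathcal{B}$, with coboundary $\delta Q(f_0,\dots,f_k)=\sum_i(-1)^i\{f_i,Q(f_0,\dots,\widehat{f_i},\dots,f_k)\}+\sum_{i<j}(-1)^{i+j}Q(\{f_i,f_j\},f_0,\dots,\widehat{f_i},\dots,\widehat{f_j},\dots,f_k)$; $H^k(\mathcal{A}_\varphi)$ denotes the resulting Poisson cohomology of $(\mathcal{A}_\varphi,\{\cdot,\cdot\}_{\mathcal{A}_\varphi})$. A $1$-derivation of $\mathcal{A}_\varphi$ is identified with $(Q[\pi x],Q[\pi y],Q[\pi z])$ and a $2$-derivation with $(Q[\pi y,\pi z],Q[\pi z,\pi x],Q[\pi x,\pi y])$. *)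

theory Defs
  imports "HOL-Computational_Algebra.Polynomial" "HOL-Library.Function_Algebras"
          "HOL-Library.Product_Plus"
begin

text \<open>F[x,y,z] is represented as ((F[x])[y])[z], i.e. the type 'a poly poly poly:
  the outermost variable is z, the middle one y and the innermost one x.\<close>

type_synonym 'a mpoly = "'a poly poly poly"
type_synonym 'a vec3 = "'a mpoly \<times> 'a mpoly \<times> 'a mpoly"

definition varX :: "'a::idom mpoly" where "varX = [:[:[:0, 1:]:]:]"
definition varY :: "'a::idom mpoly" where "varY = [:[:0, 1:]:]"
definition varZ :: "'a::idom mpoly" where "varZ = [:0, 1:]"

definition mconst :: "'a::idom \<Rightarrow> 'a mpoly" where "mconst c = [:[:[:c:]:]:]"

definition mcoeff :: "'a::idom mpoly \<Rightarrow> nat \<Rightarrow> nat \<Rightarrow> nat \<Rightarrow> 'a" where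
  "mcoeff p a b c = coeff (coeff (coeff p c) b) a"

definition dX :: "'a::idom mpoly \<Rightarrow> 'a mpoly" where "dX p = map_poly (map_poly pderiv) p"
definition dY :: "'a::idom mpoly \<Rightarrow> 'a mpoly" where "dY p = map_poly pderiv p"
definition dZ :: "'a::idom mpoly \<Rightarrow> 'a mpoly" where "dZ p = pderiv p"

definition grad :: "'a::idom mpoly \<Rightarrow> 'a vec3" where
  "grad f = (dX f, dY f, dZ f)"

definition dot :: "'a::idom vec3 \<Rightarrow> 'a vec3 \<Rightarrow> 'a mpoly" where
  "dot u v = (case u of (u1, u2, u3) \<Rightarrow> case v of (v1, v2, v3) \<Rightarrow> u1 * v1 + u2 * v2 + u3 * v3)"

definition cross :: "'a::idom vec3 \<Rightarrow> 'a vec3 \<Rightarrow> 'a vec3" where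
  "cross u v = (case u of (u1, u2, u3) \<Rightarrow> case v of (v1, v2, v3) \<Rightarrow>
      (u2 * v3 - u3 * v2, u3 * v1 - u1 * v3, u1 * v2 - u2 * v1))"

definition Div :: "'a::idom vec3 \<Rightarrow> 'a mpoly" where
  "Div u = (case u of (u1, u2, u3) \<Rightarrow> dX u1 + dY u2 + dZ u3)"

definition vsmult :: "'a::idom mpoly \<Rightarrow> 'a vec3 \<Rightarrow> 'a vec3" where
  "vsmult g u = (case u of (u1, u2, u3) \<Rightarrow> (g * u1, g * u2, g * u3))"

definition in_ideal :: "'a::idom mpoly \<Rightarrow> 'a mpoly \<Rightarrow> bool" where
  "in_ideal \<phi> f \<longleftrightarrow> (\<exists>h. f = \<phi> * h)"

definition vin_ideal :: "'a::idom mpoly \<Rightarrow> 'a vec3 \<Rightarrow> bool" where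
  "vin_ideal \<phi> u \<longleftrightarrow> in_ideal \<phi> (fst u) \<and> in_ideal \<phi> (fst (snd u)) \<and> in_ideal \<phi> (snd (snd u))"

definition weight_homogeneous ::
    "nat \<Rightarrow> nat \<Rightarrow> nat \<Rightarrow> nat \<Rightarrow> 'a::idom mpoly \<Rightarrow> bool" where
  "weight_homogeneous w1 w2 w3 d p \<longleftrightarrow> p \<noteq> 0 \<and>
     (\<forall>a b c. mcoeff p a b c \<noteq> 0 \<longrightarrow> a * w1 + b * w2 + c * w3 = d)"

definition jac_ideal :: "'a::idom mpoly \<Rightarrow> 'a mpoly set" where
  "jac_ideal \<phi> = {a * dX \<phi> + b * dY \<phi> + c * dZ \<phi> | a b c. True}"

text \<open>A_sing = A / jac_ideal is a nonzero finite-dimensional F-vector space.\<close>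
definition Asing_nonzero_findim :: "'a::idom mpoly \<Rightarrow> bool" where
  "Asing_nonzero_findim \<phi> \<longleftrightarrow> 1 \<notin> jac_ideal \<phi> \<and>
     (\<exists>S. finite S \<and> (\<forall>p. \<exists>c. p - (\<Sum>s\<in>S. mconst (c s) * s) \<in> jac_ideal \<phi>))"

definition whis :: "nat \<Rightarrow> nat \<Rightarrow> nat \<Rightarrow> 'a::idom mpoly \<Rightarrow> bool" where
  "whis w1 w2 w3 \<phi> \<longleftrightarrow> (\<exists>d. weight_homogeneous w1 w2 w3 d \<phi>) \<and> Asing_nonzero_findim \<phi>"

text \<open>Poisson bracket on A: {f,g}_phi = grad f . (grad g x grad phi); on A_phi it is
  computed on representatives.\<close>
definition pb :: "'a::idom mpoly \<Rightarrow> 'a mpoly \<Rightarrow> 'a mpoly \<Rightarrow> 'a mpoly" where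
  "pb \<phi> f g = dot (grad f) (cross (grad g) (grad \<phi>))"

text \<open>A map Q : A_phi^k -> A_phi is represented by a lift Q : A^k -> A (arguments given as
  a list of length k); all identities are required modulo <phi>, and well-definedness on
  classes is required explicitly.\<close>
definition skew_derivation :: "'a::idom mpoly \<Rightarrow> nat \<Rightarrow> ('a mpoly list \<Rightarrow> 'a mpoly) \<Rightarrow> bool" where
  "skew_derivation \<phi> k Q \<longleftrightarrow>
     (\<forall>fs gs. length fs = k \<longrightarrow> length gs = k \<longrightarrow> (\<forall>i<k. in_ideal \<phi> (fs ! i - gs ! i))
        \<longrightarrow> in_ideal \<phi> (Q fs - Q gs)) \<and>
     (\<forall>fs i g h a b. length fs = k \<longrightarrow> i < k \<longrightarrow>
        in_ideal \<phi> (Q (fs[i := mconst a * g + mconst b * h])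
                     - (mconst a * Q (fs[i := g]) + mconst b * Q (fs[i := h])))) \<and>
     (\<forall>fs i g h. length fs = k \<longrightarrow> i < k \<longrightarrow>
        in_ideal \<phi> (Q (fs[i := g * h]) - (g * Q (fs[i := h]) + h * Q (fs[i := g])))) \<and>
     (\<forall>fs i j. length fs = k \<longrightarrow> i < j \<longrightarrow> j < k \<longrightarrow>
        in_ideal \<phi> (Q (fs[i := fs ! j, j := fs ! i]) + Q fs))"

definition del :: "nat \<Rightarrow> 'b list \<Rightarrow> 'b list" where
  "del i xs = take i xs @ drop (Suc i) xs"

text \<open>Poisson coboundary (applied to a list f_0, ..., f_k of length k+1).\<close>
definition cobound :: "'a::idom mpoly \<Rightarrow> ('a mpoly list \<Rightarrow> 'a mpoly) \<Rightarrow> 'a mpoly list \<Rightarrow> 'a mpoly" where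
  "cobound \<phi> Q fs =
     (\<Sum>i<length fs. (-1) ^ i * pb \<phi> (fs ! i) (Q (del i fs))) +
     (\<Sum>i<length fs. \<Sum>j<length fs. if i < j
        then (-1) ^ (i + j) * Q (pb \<phi> (fs ! i) (fs ! j) # del i (del j fs)) else 0)"

definition cocycles :: "'a::idom mpoly \<Rightarrow> nat \<Rightarrow> ('a mpoly list \<Rightarrow> 'a mpoly) set" where
  "cocycles \<phi> k = {Q. skew_derivation \<phi> k Q \<and>
      (\<forall>fs. length fs = Suc k \<longrightarrow> in_ideal \<phi> (cobound \<phi> Q fs))}"

definition coboundaries :: "'a::idom mpoly \<Rightarrow> nat \<Rightarrow> ('a mpoly list \<Rightarrow> 'a mpoly) set" where
  "coboundaries \<phi> k = {Q. skew_derivation \<phi> k Q \<and>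
      (if k = 0 then in_ideal \<phi> (Q [])
       else (\<exists>P. skew_derivation \<phi> (k - 1) P \<and>
              (\<forall>fs. length fs = k \<longrightarrow> in_ideal \<phi> (Q fs - cobound \<phi> P fs))))}"

text \<open>quot_iso Z B smZ V W smV: there is an F-linear isomorphism Z/B ~ V/W, presented as an
  F-linear (modulo W) map Phi : Z -> V inducing a bijection Z/B -> V/W.\<close>
definition quot_iso ::
  "'u::ab_group_add set \<Rightarrow> 'u set \<Rightarrow> ('c \<Rightarrow> 'u \<Rightarrow> 'u) \<Rightarrow>
   'v::ab_group_add set \<Rightarrow> 'v set \<Rightarrow> ('c \<Rightarrow> 'v \<Rightarrow> 'v) \<Rightarrow> bool" where
  "quot_iso Z B smZ V W smV \<longleftrightarrow> (\<exists>\<Phi>.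
      (\<forall>z\<in>Z. \<Phi> z \<in> V) \<and>
      (\<forall>z1\<in>Z. \<forall>z2\<in>Z. \<Phi> (z1 + z2) - (\<Phi> z1 + \<Phi> z2) \<in> W) \<and>
      (\<forall>c. \<forall>z\<in>Z. \<Phi> (smZ c z) - smV c (\<Phi> z) \<in> W) \<and>
      (\<forall>v\<in>V. \<exists>z\<in>Z. v - \<Phi> z \<in> W) \<and>
      (\<forall>z\<in>Z. \<Phi> z \<in> W \<longleftrightarrow> z \<in> B))"

definition cochain_smult :: "'a::idom \<Rightarrow> ('a mpoly list \<Rightarrow> 'a mpoly) \<Rightarrow> ('a mpoly list \<Rightarrow> 'a mpoly)" where
  "cochain_smult c Q = (\<lambda>fs. mconst c * Q fs)"

end

theory Submission
  imports Defs
begin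

text \<open>
  A skew-symmetric \<open>k\<close>-derivation of \<open>A/\<langle>\<phi>\<rangle>\<close> satisfies the chain rule in each argument modulo
  \<open>\<phi>\<close>, so it is determined by its values on the coordinate functions \<open>x, y, z\<close>. Inserting
  \<open>\<phi> \<equiv> 0\<close> into one argument and expanding by the chain rule yields the constraints
  \<open>f \<cdot> \<nabla>\<phi> \<equiv> 0\<close> for \<open>k = 1\<close>, \<open>f \<times> \<nabla>\<phi> \<equiv> 0\<close> for \<open>k = 2\<close>, and \<open>\<partial>\<phi> \<cdot> Q(x, y, z) \<equiv> 0\<close> for all
  three partials \<open>\<partial>\<phi>\<close> when \<open>k = 3\<close>; conversely every such \<open>f\<close> defines the derivation
  \<open>g \<mapsto> \<nabla>g \<cdot> f\<close>, resp. \<open>(g, h) \<mapsto> (\<nabla>g \<times> \<nabla>h) \<cdot> f\<close>. Since \<open>A_sing\<close> is finite-dimensional, the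
  Jacobian ideal contains a nonzero polynomial in \<open>x\<close> alone and one in \<open>z\<close> alone; both annihilate
  \<open>Q(x, y, z)\<close> modulo \<open>\<phi>\<close> and they are coprime, so every skew 3-derivation vanishes.

  The cohomology then follows from two identities for the coboundary \<open>\<delta>\<close>:
  \<open>\<delta>(g \<mapsto> \<nabla>g \<cdot> f) (g, h) = (\<nabla>g \<times> \<nabla>h) \<cdot> (- \<nabla>(f \<cdot> \<nabla>\<phi>) + Div f \<nabla>\<phi>)\<close> and
  \<open>\<delta>((g, h) \<mapsto> (\<nabla>g \<times> \<nabla>h) \<cdot> f) (g, h, k) = - det (\<nabla>g, \<nabla>h, \<nabla>k) (\<nabla>\<phi> \<cdot> curl f)\<close>, where
  \<open>\<nabla>\<phi> \<cdot> curl f = Div (f \<times> \<nabla>\<phi>) \<in> \<langle>\<phi>\<rangle>\<close> whenever \<open>f \<times> \<nabla>\<phi> \<in> \<langle>\<phi>\<rangle>\<close>, so all 2-derivations are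
  cocycles.
\<close>

section \<open>Derivations\<close>

definition derivation :: "('b::comm_ring_1 \<Rightarrow> 'b) \<Rightarrow> bool" where
  "derivation D \<longleftrightarrow> (\<forall>a b. D (a + b) = D a + D b) \<and> (\<forall>a b. D (a * b) = a * D b + b * D a)"

lemma derivation_add: "derivation D \<Longrightarrow> D (a + b) = D a + D b"
  and derivation_mult: "derivation D \<Longrightarrow> D (a * b) = a * D b + b * D a"
  unfolding derivation_def by blast+

lemma derivation_0: "derivation D \<Longrightarrow> D 0 = 0"
  using derivation_add[of D 0 0] by simp

lemma derivation_minus: "derivation D \<Longrightarrow> D (- a) = - D a"
  using derivation_add[of D a "- a"] derivation_0[of D] by (metis add.commute eq_neg_iff_add_eq_0)

lemma derivation_diff: "derivation D \<Longrightarrow> D (a - b) = D a - D b"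
  using derivation_add[of D a "- b"] derivation_minus[of D b] by simp

lemma derivation_sum: "derivation D \<Longrightarrow> D (sum f A) = (\<Sum>x\<in>A. D (f x))"
  by (induction A rule: infinite_finite_induct) (auto simp: derivation_0 derivation_add)

lemma derivation_of_nat_mult:
  assumes D: "derivation D"
  shows "D (of_nat n * a) = of_nat n * D a"
proof -
  have "D 1 = 0" using derivation_mult[OF D, of 1 1] by simp
  then have "D (of_nat n) = 0" by (induction n) (simp_all add: D derivation_0 derivation_add)
  then show ?thesis by (simp add: D derivation_mult)
qed

lemma derivation_pderiv: "derivation (pderiv :: 'a::idom poly \<Rightarrow> _)"
  unfolding derivation_def by (simp add: pderiv_add pderiv_mult)

lemma derivation_map_poly:
  assumes D: "derivation D"
  shows "derivation (map_poly D)"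
proof -
  have add: "map_poly D (p + q) = map_poly D p + map_poly D q" for p q
    by (rule poly_eqI) (simp add: coeff_map_poly D derivation_0 derivation_add)
  have mult: "map_poly D (p * q) = p * map_poly D q + q * map_poly D p" for p q
  proof (rule poly_eqI)
    fix n
    have "coeff (map_poly D (p * q)) n
        = (\<Sum>i\<le>n. coeff p i * D (coeff q (n - i))) + (\<Sum>i\<le>n. coeff q (n - i) * D (coeff p i))"
      by (simp add: coeff_map_poly coeff_mult D derivation_0 derivation_sum derivation_mult
          sum.distrib)
    also have "(\<Sum>i\<le>n. coeff q (n - i) * D (coeff p i)) = (\<Sum>i\<le>n. coeff q i * D (coeff p (n - i)))"
      by (rule sum.reindex_bij_witness[where i="\<lambda>i. n - i" and j="\<lambda>i. n - i"]) auto
    finally show "coeff (map_poly D (p * q)) n = coeff (p * map_poly D q + q * map_poly D p) n"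
      by (simp add: coeff_mult coeff_map_poly D derivation_0)
  qed
  show ?thesis
    unfolding derivation_def using add mult by blast
qed

lemma pderiv_map_poly_derivation:
  "derivation D \<Longrightarrow> pderiv (map_poly D p) = map_poly D (pderiv p)"
  by (rule poly_eqI)
    (simp add: coeff_pderiv coeff_map_poly derivation_0 derivation_of_nat_mult del: of_nat_Suc)

lemma derivation_dX: "derivation dX"
  and derivation_dY: "derivation dY"
  and derivation_dZ: "derivation dZ"
  unfolding dX_def[abs_def] dY_def[abs_def] dZ_def[abs_def]
  by (intro derivation_map_poly derivation_pderiv)+

lemma dY_dX: "dY (dX p) = dX (dY p)"
proof -
  have "pderiv \<circ> map_poly pderiv = map_poly pderiv \<circ> (pderiv :: 'a poly poly \<Rightarrow> _)"
    by (simp add: fun_eq_iff pderiv_map_poly_derivation[OF derivation_pderiv])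
  then show ?thesis
    unfolding dX_def dY_def by (simp add: map_poly_map_poly)
qed

lemma dZ_dX: "dZ (dX p) = dX (dZ p)"
  unfolding dX_def dZ_def
  by (rule pderiv_map_poly_derivation[OF derivation_map_poly[OF derivation_pderiv]])

lemma dZ_dY: "dZ (dY p) = dY (dZ p)"
  unfolding dY_def dZ_def by (rule pderiv_map_poly_derivation[OF derivation_pderiv])

lemmas partial_simps =
  derivation_add[OF derivation_dX] derivation_add[OF derivation_dY] derivation_add[OF derivation_dZ]
  derivation_mult[OF derivation_dX] derivation_mult[OF derivation_dY] derivation_mult[OF derivation_dZ]
  derivation_diff[OF derivation_dX] derivation_diff[OF derivation_dY] derivation_diff[OF derivation_dZ]
  derivation_minus[OF derivation_dX] derivation_minus[OF derivation_dY] derivation_minus[OF derivation_dZ]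
  derivation_0[OF derivation_dX] derivation_0[OF derivation_dY] derivation_0[OF derivation_dZ]
  dY_dX dZ_dX dZ_dY

lemma partial_mconst [simp]: "dX (mconst c) = 0" "dY (mconst c) = 0" "dZ (mconst c) = 0"
  by (simp_all add: dX_def dY_def dZ_def mconst_def map_poly_pCons)

lemma partial_var [simp]:
  "dX (varX :: 'a::idom mpoly) = 1" "dY (varX :: 'a::idom mpoly) = 0" "dZ (varX :: 'a::idom mpoly) = 0"
  "dX (varY :: 'a::idom mpoly) = 0" "dY (varY :: 'a::idom mpoly) = 1" "dZ (varY :: 'a::idom mpoly) = 0"
  "dX (varZ :: 'a::idom mpoly) = 0" "dY (varZ :: 'a::idom mpoly) = 0" "dZ (varZ :: 'a::idom mpoly) = 1"
  by (simp_all add: dX_def dY_def dZ_def varX_def varY_def varZ_def pderiv_pCons one_pCons map_poly_pCons)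

lemma grad_0 [simp]: "grad 0 = 0"
  by (simp add: grad_def partial_simps zero_prod_def)

section \<open>The ideal generated by \<phi>\<close>

lemma in_ideal_iff_dvd: "in_ideal \<phi> f \<longleftrightarrow> \<phi> dvd f"
  by (auto simp: in_ideal_def dvd_def)

lemma vin_ideal_Pair [simp]: "vin_ideal \<phi> (a, b, c) \<longleftrightarrow> \<phi> dvd a \<and> \<phi> dvd b \<and> \<phi> dvd c"
  by (simp add: vin_ideal_def in_ideal_iff_dvd)

lemma vin_ideal_0 [simp]: "vin_ideal \<phi> 0"
  by (simp add: vin_ideal_def in_ideal_iff_dvd)

lemma dvd_dot_right: "vin_ideal \<phi> v \<Longrightarrow> \<phi> dvd dot u v"
  by (cases u; cases v) (simp add: dot_def)

lemma mconst_simps [simp]: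
  "mconst 0 = 0" "mconst 1 = 1" "mconst (a + b) = mconst a + mconst b"
  "mconst (a * b) = mconst a * mconst b" "mconst (- a) = - mconst a"
  by (simp_all add: mconst_def one_pCons)

lemma dvd_iff_dvd_of_dvd_diff: "a dvd b - c \<Longrightarrow> a dvd b \<longleftrightarrow> a dvd c"
  for a b c :: "'a::comm_ring_1"
  by (metis diff_add_cancel dvd_add_right_iff)

lemma dvd_iff_dvd_of_dvd_add: "a dvd b + c \<Longrightarrow> a dvd b \<longleftrightarrow> a dvd c"
  for a b c :: "'a::comm_ring_1"
  by (metis dvd_add_left_iff dvd_add_right_iff)

lemma dvd_double_imp_dvd:
  fixes q :: "'a::field_char_0 mpoly"
  assumes "\<phi> dvd q + q"
  shows "\<phi> dvd q"
proof -
  have "mconst (1/2) * (q + q) = mconst (1/2 + 1/2) * q"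
    by (simp only: mconst_simps distrib_left distrib_right)
  then have "q = mconst (1/2) * (q + q)"
    by simp
  with assms show ?thesis
    by (metis dvd_mult)
qed

section \<open>Derivations modulo \<phi>\<close>

lemma mpoly_induct [case_names const X Y Z add mult]:
  fixes P :: "'a::idom mpoly \<Rightarrow> bool"
  assumes const: "\<And>c. P (mconst c)" and X: "P varX" and Y: "P varY" and Z: "P varZ"
    and add: "\<And>a b. P a \<Longrightarrow> P b \<Longrightarrow> P (a + b)"
    and mult: "\<And>a b. P a \<Longrightarrow> P b \<Longrightarrow> P (a * b)"
  shows "P p"
proof -
  have pCons_split: "pCons a q = [:a:] + [:0, 1:] * q" for a and q :: "'b::comm_ring_1 poly"
    by simp
  have in_x: "P [:[:c:]:]" for c
  proof (induction c)
    case 0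
    then show ?case using const[of 0] by (simp add: mconst_def)
  next
    case (pCons a r)
    have "[:[:pCons a r:]:] = mconst a + varX * [:[:r:]:]"
      by (subst pCons_split) (simp add: mconst_def varX_def)
    moreover have "P (mconst a + varX * [:[:r:]:])"
      using pCons const X add mult by blast
    ultimately show ?case by simp
  qed
  have in_xy: "P [:b:]" for b
  proof (induction b)
    case 0
    then show ?case using in_x[of 0] by simp
  next
    case (pCons a r)
    have "[:pCons a r:] = [:[:a:]:] + varY * [:r:]"
      by (subst pCons_split) (simp add: varY_def)
    moreover have "P ([:[:a:]:] + varY * [:r:])"
      using pCons in_x Y add mult by blast
    ultimately show ?case by simp
  qed
  show ?thesis
  proof (induction p)
    case 0
    then show ?case using in_xy[of 0] by simp
  next
    case (pCons a r)
    have "pCons a r = [:a:] + varZ * r"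
      by (subst pCons_split) (simp add: varZ_def)
    moreover have "P ([:a:] + varZ * r)"
      using pCons in_xy Z add mult by blast
    ultimately show ?case by simp
  qed
qed

definition derivation_mod :: "'a::idom mpoly \<Rightarrow> ('a mpoly \<Rightarrow> 'a mpoly) \<Rightarrow> bool" where
  "derivation_mod \<phi> D \<longleftrightarrow>
     (\<forall>g h a b. \<phi> dvd D (mconst a * g + mconst b * h) - (mconst a * D g + mconst b * D h)) \<and>
     (\<forall>g h. \<phi> dvd D (g * h) - (g * D h + h * D g))"

lemma derivation_mod_0: "derivation_mod \<phi> D \<Longrightarrow> \<phi> dvd D 0"
  unfolding derivation_mod_def by (metis add_0 diff_zero mult_zero_left)

lemma derivation_imp_derivation_mod:
  assumes "derivation D" "\<And>c. D (mconst c) = 0"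
  shows "derivation_mod \<phi> D"
  using assms by (simp add: derivation_mod_def derivation_add derivation_mult)

lemma derivation_mod_chain_rule:
  assumes "derivation_mod \<phi> D"
  shows "\<phi> dvd D p - (dX p * D varX + dY p * D varY + dZ p * D varZ)"
proof -
  have lin: "\<phi> dvd D (mconst a * g + mconst b * h) - (mconst a * D g + mconst b * D h)" for a b g h
    using assms unfolding derivation_mod_def by blast
  have leibniz: "\<phi> dvd D (g * h) - (g * D h + h * D g)" for g h
    using assms unfolding derivation_mod_def by blast
  have D_const: "\<phi> dvd D (mconst c)" for c
  proof -
    have "\<phi> dvd D 1"
      using leibniz[of 1 1] by simp
    moreover have "\<phi> dvd D (mconst c) - mconst c * D 1"
      using lin[of c 1 0 1] by simp
    ultimately show ?thesis
      by (metis diff_add_cancel dvd_add dvd_mult)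
  qed
  show ?thesis
  proof (induction p rule: mpoly_induct)
    case (const c)
    then show ?case using D_const by simp
  next
    case (add a b)
    have "D (a + b) - (dX (a + b) * D varX + dY (a + b) * D varY + dZ (a + b) * D varZ)
      = (D (a + b) - (D a + D b)) + (D a - (dX a * D varX + dY a * D varY + dZ a * D varZ))
        + (D b - (dX b * D varX + dY b * D varY + dZ b * D varZ))"
      by (simp add: partial_simps algebra_simps)
    then show ?case using add.IH lin[of 1 a 1 b] by (metis dvd_add mconst_simps(2) mult_1)
  next
    case (mult a b)
    have "D (a * b) - (dX (a * b) * D varX + dY (a * b) * D varY + dZ (a * b) * D varZ)
      = (D (a * b) - (a * D b + b * D a)) + a * (D b - (dX b * D varX + dY b * D varY + dZ b * D varZ))
        + b * (D a - (dX a * D varX + dY a * D varY + dZ a * D varZ))"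
      by (simp add: partial_simps algebra_simps)
    then show ?case using mult.IH leibniz[of a b] by (metis dvd_add dvd_mult)
  qed simp_all
qed

lemma derivation_mod_zero:
  assumes "derivation_mod \<phi> D" "\<phi> dvd D varX" "\<phi> dvd D varY" "\<phi> dvd D varZ"
  shows "\<phi> dvd D p"
proof -
  have "\<phi> dvd dX p * D varX + dY p * D varY + dZ p * D varZ"
    using assms(2-4) by (intro dvd_add dvd_mult)
  from dvd_add[OF derivation_mod_chain_rule[OF assms(1), of p] this] show ?thesis
    by simp
qed

definition multiderivation_mod :: "'a::idom mpoly \<Rightarrow> nat \<Rightarrow> ('a mpoly list \<Rightarrow> 'a mpoly) \<Rightarrow> bool" where
  "multiderivation_mod \<phi> k Q \<longleftrightarrow>
     (\<forall>fs i. length fs = k \<longrightarrow> i < k \<longrightarrow> derivation_mod \<phi> (\<lambda>g. Q (fs[i := g])))"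

lemma derivation_mod_diff:
  assumes "derivation_mod \<phi> D" "derivation_mod \<phi> D'"
  shows "derivation_mod \<phi> (\<lambda>g. D g - D' g)"
  unfolding derivation_mod_def
proof (intro allI conjI)
  have diff: "\<phi> dvd (D u - D' u) - (v - v')" if "\<phi> dvd D u - v" "\<phi> dvd D' u - v'" for u v v'
    using dvd_diff[OF that] by (simp add: algebra_simps)
  fix g h a b
  have "\<phi> dvd D (mconst a * g + mconst b * h) - (mconst a * D g + mconst b * D h)"
    and "\<phi> dvd D' (mconst a * g + mconst b * h) - (mconst a * D' g + mconst b * D' h)"
    using assms unfolding derivation_mod_def by blast+
  from diff[OF this] show "\<phi> dvd D (mconst a * g + mconst b * h) - D' (mconst a * g + mconst b * h)
      - (mconst a * (D g - D' g) + mconst b * (D h - D' h))"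
    by (simp add: algebra_simps)
  have "\<phi> dvd D (g * h) - (g * D h + h * D g)" and "\<phi> dvd D' (g * h) - (g * D' h + h * D' g)"
    using assms unfolding derivation_mod_def by blast+
  from diff[OF this] show "\<phi> dvd D (g * h) - D' (g * h) - (g * (D h - D' h) + h * (D g - D' g))"
    by (simp add: algebra_simps)
qed

lemma multiderivation_mod_diff:
  assumes "multiderivation_mod \<phi> k Q" "multiderivation_mod \<phi> k Q'"
  shows "multiderivation_mod \<phi> k (\<lambda>fs. Q fs - Q' fs)"
  unfolding multiderivation_mod_def
proof (intro allI impI)
  fix fs :: "'a mpoly list" and i
  assume "length fs = k" "i < k"
  with assms show "derivation_mod \<phi> (\<lambda>g. Q (fs[i := g]) - Q' (fs[i := g]))"
    unfolding multiderivation_mod_def by (simp add: derivation_mod_diff)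
qed

lemma multiderivation_mod_coordinates:
  assumes Q: "multiderivation_mod \<phi> k Q"
    and coord: "\<And>fs. length fs = k \<Longrightarrow> set fs \<subseteq> {varX, varY, varZ} \<Longrightarrow> \<phi> dvd Q fs"
    and "length fs = k"
  shows "\<phi> dvd Q fs"
proof -
  have "\<phi> dvd Q fs" if "length fs = k" "set (drop m fs) \<subseteq> {varX, varY, varZ}" for m fs
    using that
  proof (induction m arbitrary: fs)
    case 0
    then show ?case using coord by simp
  next
    case (Suc m)
    show ?case
    proof (cases "m < k")
      case True
      have "drop m (fs[m := v]) = v # drop (Suc m) fs" for v
        using Cons_nth_drop_Suc[of m "fs[m := v]"] True Suc.prems(1) by simp
      then have "\<phi> dvd Q (fs[m := v])" if "v \<in> {varX, varY, varZ}" for v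
        using Suc.IH[of "fs[m := v]"] Suc.prems that by simp
      moreover have "derivation_mod \<phi> (\<lambda>g. Q (fs[m := g]))"
        using Q Suc.prems(1) True unfolding multiderivation_mod_def by blast
      ultimately have "\<phi> dvd Q (fs[m := fs ! m])"
        using derivation_mod_zero[of \<phi> "\<lambda>g. Q (fs[m := g])" "fs ! m"] by simp
      then show ?thesis by simp
    next
      case False
      then show ?thesis using Suc by simp
    qed
  qed
  from this[of fs k] assms(3) show ?thesis by simp
qed

section \<open>Skew-symmetric derivations\<close>

lemma skew_derivation_cong:
  assumes "skew_derivation \<phi> k Q" "length fs = k" "length gs = k"
    "\<And>i. i < k \<Longrightarrow> \<phi> dvd fs ! i - gs ! i"
  shows "\<phi> dvd Q fs - Q gs"
  using assms unfolding skew_derivation_def in_ideal_iff_dvd by blast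

lemma skew_derivation_swap:
  assumes "skew_derivation \<phi> k Q" "length fs = k" "i < j" "j < k"
  shows "\<phi> dvd Q (fs[i := fs ! j, j := fs ! i]) + Q fs"
  using assms unfolding skew_derivation_def in_ideal_iff_dvd by blast

lemma skew_derivation_multiderivation_mod:
  "skew_derivation \<phi> k Q \<Longrightarrow> multiderivation_mod \<phi> k Q"
  unfolding skew_derivation_def multiderivation_mod_def derivation_mod_def in_ideal_iff_dvd
  by blast

lemma skew_derivationI:
  assumes "\<And>fs gs. length fs = k \<Longrightarrow> length gs = k \<Longrightarrow>
      (\<And>i. i < k \<Longrightarrow> \<phi> dvd fs ! i - gs ! i) \<Longrightarrow> \<phi> dvd Q fs - Q gs"
    and "multiderivation_mod \<phi> k Q"
    and "\<And>fs i j. length fs = k \<Longrightarrow> i < j \<Longrightarrow> j < k \<Longrightarrow>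
      \<phi> dvd Q (fs[i := fs ! j, j := fs ! i]) + Q fs"
  shows "skew_derivation \<phi> k Q"
  using assms unfolding skew_derivation_def multiderivation_mod_def derivation_mod_def in_ideal_iff_dvd
  by blast

lemma skew_derivation_0 [simp]: "skew_derivation \<phi> 0 Q"
  by (simp add: skew_derivation_def in_ideal_iff_dvd)

lemma skew_derivation_repeat:
  fixes Q :: "'a::field_char_0 mpoly list \<Rightarrow> 'a mpoly"
  assumes "skew_derivation \<phi> k Q" "length fs = k" "i < j" "j < k" "fs ! i = fs ! j"
  shows "\<phi> dvd Q fs"
proof -
  have "fs[i := fs ! j, j := fs ! i] = fs"
    using assms(5) list_update_id[of fs i] list_update_id[of fs j] by simp
  then have "\<phi> dvd Q fs + Q fs"
    using skew_derivation_swap[OF assms(1-4)] by simp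
  then show ?thesis
    by (rule dvd_double_imp_dvd)
qed

lemma skew_derivation_phi_arg:
  assumes Q: "skew_derivation \<phi> k Q" and "length fs = k" "i < k"
  shows "\<phi> dvd Q (fs[i := \<phi>])"
proof -
  have "\<phi> dvd Q (fs[i := \<phi>]) - Q (fs[i := 0])"
    by (rule skew_derivation_cong[OF Q]) (use assms(2,3) in \<open>auto simp: nth_list_update\<close>)
  moreover have "derivation_mod \<phi> (\<lambda>g. Q (fs[i := g]))"
    using skew_derivation_multiderivation_mod[OF Q] assms(2,3) unfolding multiderivation_mod_def by blast
  ultimately show ?thesis
    using derivation_mod_0 dvd_diff_left_iff by blast
qed

lemma skew_derivation_grad_phi:
  assumes Q: "skew_derivation \<phi> k Q" and "length fs = k" "i < k"
  shows "\<phi> dvd dX \<phi> * Q (fs[i := varX]) + dY \<phi> * Q (fs[i := varY]) + dZ \<phi> * Q (fs[i := varZ])"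
proof -
  have "derivation_mod \<phi> (\<lambda>g. Q (fs[i := g]))"
    using skew_derivation_multiderivation_mod[OF Q] assms(2,3) unfolding multiderivation_mod_def by blast
  from derivation_mod_chain_rule[OF this, of \<phi>] show ?thesis
    using skew_derivation_phi_arg[OF assms] by (simp add: dvd_diff_right_iff add.assoc)
qed

section \<open>The Jacobian ideal\<close>

lemma combinations_of_finite_set_dependent:
  fixes S :: "'a::field mpoly set" and c :: "nat \<Rightarrow> 'a mpoly \<Rightarrow> 'a"
  assumes "finite S"
  shows "\<exists>a. (\<exists>j\<le>card S. a j \<noteq> 0) \<and> (\<Sum>j\<le>card S. mconst (a j) * (\<Sum>s\<in>S. mconst (c j s) * s)) = 0"
proof -
  interpret mv: vector_space "\<lambda>c (p::'a mpoly). mconst c * p"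
    by unfold_locales (simp_all add: distrib_left distrib_right mult.assoc)
  define n where "n = card S"
  define v where "v j = (\<Sum>s\<in>S. mconst (c j s) * s)" for j
  have "\<exists>a. (\<exists>j\<le>n. a j \<noteq> 0) \<and> (\<Sum>j\<le>n. mconst (a j) * v j) = 0"
  proof (cases "inj_on v {..n}")
    case False
    then obtain i j where ij: "i \<le> n" "j \<le> n" "i \<noteq> j" "v i = v j"
      unfolding inj_on_def by auto
    define a where "a k = (if k = i then 1 else if k = j then -1 else (0::'a))" for k
    have "(\<Sum>k\<le>n. mconst (a k) * v k) = (\<Sum>k\<in>{i, j}. mconst (a k) * v k)"
      by (rule sum.mono_neutral_right) (use ij in \<open>auto simp: a_def\<close>)
    also have "\<dots> = 0"
      using ij by (simp add: a_def)
    finally have "(\<Sum>k\<le>n. mconst (a k) * v k) = 0" .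
    moreover have "a i \<noteq> 0"
      by (simp add: a_def)
    ultimately show ?thesis
      using ij(1) by blast
  next
    case True
    define V where "V = v ` {..n}"
    have "card V = Suc n"
      unfolding V_def using True by (simp add: card_image)
    moreover have "mconst e * s \<in> mv.span S" if "s \<in> S" for s e
      using mv.span_scale[OF mv.span_base[OF that], of e] by simp
    then have "V \<subseteq> mv.span S"
      unfolding V_def v_def by (auto intro!: mv.span_sum)
    ultimately have "\<not> mv.independent V"
      using mv.independent_span_bound[OF \<open>finite S\<close>] unfolding n_def by fastforce
    moreover have "finite V"
      unfolding V_def by simp
    ultimately obtain w where w: "\<exists>x\<in>V. w x \<noteq> 0" "(\<Sum>x\<in>V. mconst (w x) * x) = 0"
      using mv.dependent_finite by blast
    have "(\<Sum>j\<le>n. mconst (w (v j)) * v j) = 0"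
      using w(2) unfolding V_def by (simp add: sum.reindex[OF True])
    moreover have "\<exists>j\<le>n. w (v j) \<noteq> 0"
      using w(1) unfolding V_def by auto
    ultimately show ?thesis
      by (intro exI[of _ "\<lambda>j. w (v j)"]) simp
  qed
  then show ?thesis
    unfolding n_def v_def .
qed

lemma finite_span_mod_dependent:
  fixes J :: "'a::field mpoly set" and u :: "nat \<Rightarrow> 'a mpoly"
  assumes "finite S"
    and J0: "0 \<in> J" and J_add: "\<And>x y. x \<in> J \<Longrightarrow> y \<in> J \<Longrightarrow> x + y \<in> J"
    and J_scale: "\<And>c x. x \<in> J \<Longrightarrow> mconst c * x \<in> J"
    and span: "\<And>p. \<exists>c. p - (\<Sum>s\<in>S. mconst (c s) * s) \<in> J"
  shows "\<exists>a. (\<exists>j\<le>card S. a j \<noteq> 0) \<and> (\<Sum>j\<le>card S. mconst (a j) * u j) \<in> J"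
proof -
  have J_sum: "(\<And>i. i \<in> A \<Longrightarrow> f i \<in> J) \<Longrightarrow> sum f A \<in> J" for f and A :: "'b set"
    by (induction A rule: infinite_finite_induct) (auto simp: J0 J_add)
  have "\<forall>j. \<exists>cj. u j - (\<Sum>s\<in>S. mconst (cj s) * s) \<in> J"
    using span by blast
  then obtain c where c: "\<And>j. u j - (\<Sum>s\<in>S. mconst (c j s) * s) \<in> J"
    by metis
  define v where "v j = (\<Sum>s\<in>S. mconst (c j s) * s)" for j
  obtain a where a: "\<exists>j\<le>card S. a j \<noteq> 0" "(\<Sum>j\<le>card S. mconst (a j) * v j) = 0"
    using combinations_of_finite_set_dependent[OF \<open>finite S\<close>, of c] unfolding v_def by blast
  have "(\<Sum>j\<le>card S. mconst (a j) * u j) = (\<Sum>j\<le>card S. mconst (a j) * (u j - v j))"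
    using a(2) by (simp add: right_diff_distrib sum_subtractf)
  also have "\<dots> \<in> J"
    using c unfolding v_def by (intro J_sum J_scale) simp
  finally show ?thesis
    using a(1) by blast
qed

lemma const_poly_dvd_mult_unit_lead:
  fixes c :: "'b::idom" and R h :: "'b poly"
  assumes "[:c:] dvd h * R" and unit: "lead_coeff R dvd 1"
  shows "[:c:] dvd h"
  using assms(1)
proof (induction "degree h" arbitrary: h rule: less_induct)
  case less
  show ?case
  proof (cases "h = 0")
    case False
    have "coeff (h * R) (degree h + degree R) = lead_coeff h * lead_coeff R"
      by (rule coeff_mult_degree_sum)
    then have "c dvd lead_coeff h * lead_coeff R"
      using less.prems const_poly_dvd_iff by metis
    moreover obtain t where "1 = lead_coeff R * t"
      using unit by (rule dvdE)
    ultimately have "c dvd lead_coeff h"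
      by (metis dvd_mult2 mult.assoc mult.right_neutral)
    then obtain e where e: "lead_coeff h = c * e" ..
    define h' where "h' = h - monom (lead_coeff h) (degree h)"
    have lead: "[:c:] dvd monom (lead_coeff h) (degree h)"
      by (rule dvdI[of _ _ "monom e (degree h)"]) (simp add: e smult_monom)
    have "h * R = h' * R + monom (lead_coeff h) (degree h) * R"
      by (simp add: h'_def algebra_simps)
    with less.prems lead have "[:c:] dvd h' * R"
      by (metis add_diff_cancel dvd_diff dvd_mult2)
    moreover have "h' = 0 \<or> degree h' < degree h"
      using False by (auto simp: h'_def coeff_eq_0 intro!: degree_lessI)
    ultimately have "[:c:] dvd h'"
      using less.hyps by auto
    with lead show ?thesis
      unfolding h'_def by (metis diff_add_cancel dvd_add)
  qed simp
qed

lemma zero_in_jac_ideal: "0 \<in> jac_ideal \<phi>"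
  unfolding jac_ideal_def by (auto intro!: exI[of _ 0])

lemma jac_ideal_add: "x \<in> jac_ideal \<phi> \<Longrightarrow> y \<in> jac_ideal \<phi> \<Longrightarrow> x + y \<in> jac_ideal \<phi>"
proof -
  assume "x \<in> jac_ideal \<phi>" "y \<in> jac_ideal \<phi>"
  then obtain a1 b1 c1 a2 b2 c2 where "x = a1 * dX \<phi> + b1 * dY \<phi> + c1 * dZ \<phi>"
      "y = a2 * dX \<phi> + b2 * dY \<phi> + c2 * dZ \<phi>"
    unfolding jac_ideal_def by blast
  then have "x + y = (a1 + a2) * dX \<phi> + (b1 + b2) * dY \<phi> + (c1 + c2) * dZ \<phi>"
    by (simp add: algebra_simps)
  then show ?thesis
    unfolding jac_ideal_def by blast
qed

lemma jac_ideal_mult: "x \<in> jac_ideal \<phi> \<Longrightarrow> e * x \<in> jac_ideal \<phi>"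
proof -
  assume "x \<in> jac_ideal \<phi>"
  then obtain a b c where "x = a * dX \<phi> + b * dY \<phi> + c * dZ \<phi>"
    unfolding jac_ideal_def by blast
  then have "e * x = (e * a) * dX \<phi> + (e * b) * dY \<phi> + (e * c) * dZ \<phi>"
    by (simp add: algebra_simps)
  then show ?thesis
    unfolding jac_ideal_def by blast
qed

lemma jac_ideal_annihilator:
  assumes "r \<in> jac_ideal \<phi>" "\<phi> dvd dX \<phi> * q" "\<phi> dvd dY \<phi> * q" "\<phi> dvd dZ \<phi> * q"
  shows "\<phi> dvd r * q"
proof -
  obtain a b c where "r = a * dX \<phi> + b * dY \<phi> + c * dZ \<phi>"
    using assms(1) unfolding jac_ideal_def by blast
  then have "r * q = a * (dX \<phi> * q) + b * (dY \<phi> * q) + c * (dZ \<phi> * q)"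
    by (simp add: algebra_simps)
  then show ?thesis
    using assms(2-4) by (metis dvd_add dvd_mult)
qed

lemma jac_ideal_dependent:
  fixes \<phi> :: "'a::field mpoly" and u :: "nat \<Rightarrow> 'a mpoly"
  assumes "Asing_nonzero_findim \<phi>"
  obtains n a where "\<exists>j\<le>n. a j \<noteq> 0" "(\<Sum>j\<le>n. mconst (a j) * u j) \<in> jac_ideal \<phi>"
proof -
  obtain S where "finite S" and "\<And>p. \<exists>c. p - (\<Sum>s\<in>S. mconst (c s) * s) \<in> jac_ideal \<phi>"
    using assms unfolding Asing_nonzero_findim_def by blast
  from finite_span_mod_dependent[OF this(1) zero_in_jac_ideal jac_ideal_add jac_ideal_mult this(2)]
  obtain a where "\<exists>j\<le>card S. a j \<noteq> 0" "(\<Sum>j\<le>card S. mconst (a j) * u j) \<in> jac_ideal \<phi>"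
    by blast
  then show ?thesis
    by (rule that)
qed

lemma jac_ideal_nonzero_poly_in_x:
  fixes \<phi> :: "'a::field mpoly"
  assumes "Asing_nonzero_findim \<phi>"
  obtains p where "p \<noteq> 0" "[:[:p:]:] \<in> jac_ideal \<phi>"
proof -
  obtain n a where a: "\<exists>j\<le>n. a j \<noteq> 0" "(\<Sum>j\<le>n. mconst (a j) * varX ^ j) \<in> jac_ideal \<phi>"
    by (rule jac_ideal_dependent[OF assms])
  define p where "p = (\<Sum>j\<le>n. monom (a j) j)"
  have sum_const: "(\<Sum>j\<le>m. [:f j:]) = [:sum f {..m}:]" for m and f :: "nat \<Rightarrow> 'b::comm_ring_1"
    by (induction m) simp_all
  have "(\<Sum>j\<le>n. mconst (a j) * varX ^ j) = [:[:p:]:]"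
    unfolding p_def by (simp add: mconst_def varX_def monom_altdef poly_const_pow sum_const)
  moreover have "p \<noteq> 0"
    using a(1) by (auto simp: p_def coeff_sum poly_eq_iff)
  ultimately show ?thesis
    using that a(2) by simp
qed

lemma jac_ideal_unit_lead_coeff:
  fixes \<phi> :: "'a::field mpoly"
  assumes "Asing_nonzero_findim \<phi>"
  obtains r where "lead_coeff r dvd 1" "r \<in> jac_ideal \<phi>"
proof -
  obtain n b where b: "\<exists>j\<le>n. b j \<noteq> 0" "(\<Sum>j\<le>n. mconst (b j) * varZ ^ j) \<in> jac_ideal \<phi>"
    by (rule jac_ideal_dependent[OF assms])
  define r where "r = (\<Sum>j\<le>n. monom [:[:b j:]:] j)"
  have coeff_r: "coeff r k = (if k \<le> n then [:[:b k:]:] else 0)" for k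
    unfolding r_def by (simp add: coeff_sum)
  have "r \<noteq> 0"
    using b(1) coeff_r by (metis coeff_0 pCons_eq_0_iff)
  have "degree r \<le> n"
    by (rule degree_le) (simp add: coeff_r)
  then have lc: "lead_coeff r = [:[:b (degree r):]:]"
    by (simp add: coeff_r)
  with \<open>r \<noteq> 0\<close> have "b (degree r) \<noteq> 0"
    by auto
  with lc have "lead_coeff r dvd 1"
    by (simp add: is_unit_const_poly_iff dvd_field_iff)
  moreover have "(\<Sum>j\<le>n. mconst (b j) * varZ ^ j) = r"
    unfolding r_def by (simp add: mconst_def varZ_def monom_altdef)
  ultimately show ?thesis
    using that b(2) by simp
qed

lemma dvd_of_dvd_mult_const_and_mult_unit_lead:
  fixes \<phi> q r :: "'b::idom poly"
  assumes "\<phi> \<noteq> 0" "c \<noteq> 0" "\<phi> dvd [:c:] * q" "\<phi> dvd r * q" "lead_coeff r dvd 1"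
  shows "\<phi> dvd q"
proof -
  obtain h1 where h1: "[:c:] * q = \<phi> * h1"
    using assms(3) ..
  obtain h2 where h2: "r * q = \<phi> * h2"
    using assms(4) ..
  have "\<phi> * (h1 * r) = [:c:] * q * r"
    unfolding h1 by (simp only: mult.assoc)
  also have "\<dots> = [:c:] * (r * q)"
    by (simp only: mult.assoc mult.commute[of q r])
  also have "\<dots> = \<phi> * ([:c:] * h2)"
    unfolding h2 by (simp only: mult.left_commute)
  finally have "h1 * r = [:c:] * h2"
    using \<open>\<phi> \<noteq> 0\<close> by (metis mult_left_cancel)
  then have "[:c:] dvd h1"
    using const_poly_dvd_mult_unit_lead[OF _ assms(5)] by (metis dvd_triv_left)
  then obtain k where "h1 = [:c:] * k" ..
  with h1 have "[:c:] * q = [:c:] * (\<phi> * k)"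
    by (simp only: mult.left_commute)
  with \<open>c \<noteq> 0\<close> show ?thesis
    by (metis mult_left_cancel pCons_eq_0_iff dvd_triv_left)
qed

lemma dvd_of_dvd_partials_mult:
  fixes \<phi> q :: "'a::field mpoly"
  assumes "\<phi> \<noteq> 0" and "Asing_nonzero_findim \<phi>"
    and "\<phi> dvd dX \<phi> * q" "\<phi> dvd dY \<phi> * q" "\<phi> dvd dZ \<phi> * q"
  shows "\<phi> dvd q"
proof -
  obtain p where "p \<noteq> 0" and p: "[:[:p:]:] \<in> jac_ideal \<phi>"
    by (rule jac_ideal_nonzero_poly_in_x[OF assms(2)])
  obtain r where "lead_coeff r dvd 1" and r: "r \<in> jac_ideal \<phi>"
    by (rule jac_ideal_unit_lead_coeff[OF assms(2)])
  show ?thesis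
  proof (rule dvd_of_dvd_mult_const_and_mult_unit_lead)
    show "\<phi> dvd [:[:p:]:] * q" "\<phi> dvd r * q"
      using jac_ideal_annihilator[OF p assms(3-5)] jac_ideal_annihilator[OF r assms(3-5)] .
  qed (use \<open>\<phi> \<noteq> 0\<close> \<open>p \<noteq> 0\<close> \<open>lead_coeff r dvd 1\<close> in simp_all)
qed

section \<open>Derivations given by vector fields\<close>

definition der1 :: "'a::idom vec3 \<Rightarrow> 'a mpoly list \<Rightarrow> 'a mpoly" where
  "der1 F fs = dot (grad (hd fs)) F"

definition der2 :: "'a::idom vec3 \<Rightarrow> 'a mpoly list \<Rightarrow> 'a mpoly" where
  "der2 F fs = dot (cross (grad (fs ! 0)) (grad (fs ! 1))) F"

definition vec1 :: "('a::idom mpoly list \<Rightarrow> 'a mpoly) \<Rightarrow> 'a vec3" where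
  "vec1 Q = (Q [varX], Q [varY], Q [varZ])"

definition vec2 :: "('a::idom mpoly list \<Rightarrow> 'a mpoly) \<Rightarrow> 'a vec3" where
  "vec2 Q = (Q [varY, varZ], Q [varZ, varX], Q [varX, varY])"

lemma grad_var [simp]:
  "grad (varX :: 'a::idom mpoly) = (1, 0, 0)"
  "grad (varY :: 'a::idom mpoly) = (0, 1, 0)"
  "grad (varZ :: 'a::idom mpoly) = (0, 0, 1)"
  by (simp_all add: grad_def)

lemma der1_singleton [simp]: "der1 F [g] = dot (grad g) F"
  by (simp add: der1_def)

lemma der2_pair: "der2 F [g, h] = dot (cross (grad g) (grad h)) F"
  by (simp add: der2_def)

lemma der2_pair_left: "der2 F [g, h] = dot (grad g) (cross (grad h) F)"
  and der2_pair_right: "der2 F [g, h] = dot (grad h) (cross F (grad g))"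
  by (cases F; simp add: der2_def dot_def cross_def grad_def algebra_simps)+

lemma vec1_der1 [simp]: "vec1 (der1 F) = F"
  by (cases F) (simp add: vec1_def dot_def)

lemma vec2_der2 [simp]: "vec2 (der2 F) = F"
  by (cases F) (simp add: vec2_def der2_def dot_def cross_def)

lemma dot_cross_cyclic: "dot (cross u v) w = dot u (cross v w)"
  by (cases u; cases v; cases w) (simp add: dot_def cross_def algebra_simps)

lemma cross_anticommute: "cross u v = - cross v u"
  by (cases u; cases v) (simp add: cross_def)

lemma dot_uminus_left: "dot (- u) v = - dot u v"
  by (cases u; cases v) (simp add: dot_def algebra_simps)

lemma cross_0_left [simp]: "cross 0 v = 0"
  by (cases v) (simp add: cross_def zero_prod_def)

lemma dot_0_left [simp]: "dot 0 v = 0"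
  by (cases v) (simp add: dot_def zero_prod_def)

lemma dot_add_right: "dot u (v + w) = dot u v + dot u w"
  by (cases u; cases v; cases w) (simp add: dot_def algebra_simps)

lemma dot_diff_right: "dot u (v - w) = dot u v - dot u w"
  by (cases u; cases v; cases w) (simp add: dot_def algebra_simps)

lemma der1_diff: "der1 F fs - der1 G fs = der1 (F - G) fs"
  by (simp add: der1_def dot_diff_right)

lemma der2_diff: "der2 F fs - der2 G fs = der2 (F - G) fs"
  by (simp add: der2_def dot_diff_right)

lemma der2_add: "der2 (F + G) fs = der2 F fs + der2 G fs"
  by (simp add: der2_def dot_add_right)

lemma derivation_dot_grad: "derivation (\<lambda>g. dot (grad g) V)"
  by (cases V) (simp add: derivation_def dot_def grad_def partial_simps algebra_simps)

lemma derivation_mod_dot_grad: "derivation_mod \<phi> (\<lambda>g. dot (grad g) V)"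
  by (rule derivation_imp_derivation_mod[OF derivation_dot_grad]) (cases V, simp add: grad_def dot_def)

text \<open>Since \<open>\<nabla>(g + \<phi> h) = \<nabla>g + h \<nabla>\<phi> + \<phi> \<nabla>h\<close>, the map \<open>g \<mapsto> \<nabla>g \<cdot> V\<close> is well defined
  modulo \<open>\<phi>\<close> whenever \<open>V \<cdot> \<nabla>\<phi> \<in> \<langle>\<phi>\<rangle>\<close>.\<close>

lemma dot_grad_cong:
  assumes "\<phi> dvd dot V (grad \<phi>)" "\<phi> dvd f - g"
  shows "\<phi> dvd dot (grad f) V - dot (grad g) V"
proof -
  obtain h where "f - g = \<phi> * h"
    using assms(2) ..
  then have "f = g + \<phi> * h"
    by (simp add: algebra_simps)
  then have "dot (grad f) V - dot (grad g) V = h * dot V (grad \<phi>) + \<phi> * dot (grad h) V"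
    by (cases V) (simp add: dot_def grad_def partial_simps algebra_simps)
  with assms(1) show ?thesis
    by simp
qed

lemma der1_multiderivation_mod: "multiderivation_mod \<phi> 1 (der1 F)"
  by (auto simp: multiderivation_mod_def length_Suc_conv derivation_mod_dot_grad)

lemma der2_multiderivation_mod: "multiderivation_mod \<phi> 2 (der2 F)"
  unfolding multiderivation_mod_def
proof (intro allI impI)
  fix fs :: "'a mpoly list" and i :: nat
  assume "length fs = 2" "i < 2"
  then obtain f1 f2 where "fs = [f1, f2]" "i = 0 \<or> i = 1"
    by (auto simp: numeral_2_eq_2 length_Suc_conv less_Suc_eq)
  moreover have "der2 F [g, f2] = dot (grad g) (cross (grad f2) F)"
    and "der2 F [f1, g] = dot (grad g) (cross F (grad f1))" for g
    by (rule der2_pair_left, rule der2_pair_right)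
  ultimately show "derivation_mod \<phi> (\<lambda>g. der2 F (fs[i := g]))"
    by (auto simp: derivation_mod_dot_grad)
qed

lemma skew_derivation_der1:
  assumes "\<phi> dvd dot F (grad \<phi>)"
  shows "skew_derivation \<phi> 1 (der1 F)"
proof (rule skew_derivationI[OF _ der1_multiderivation_mod])
  fix fs gs :: "'a mpoly list"
  assume "length fs = 1" "length gs = 1" "\<And>i. i < 1 \<Longrightarrow> \<phi> dvd fs ! i - gs ! i"
  then show "\<phi> dvd der1 F fs - der1 F gs"
    using dot_grad_cong[OF assms] by (auto simp: length_Suc_conv)
qed simp

lemma skew_derivation_der2:
  assumes "vin_ideal \<phi> (cross F (grad \<phi>))"
  shows "skew_derivation \<phi> 2 (der2 F)"
proof (rule skew_derivationI[OF _ der2_multiderivation_mod])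
  fix fs gs :: "'a mpoly list"
  assume "length fs = 2" "length gs = 2" and cong: "\<And>i. i < 2 \<Longrightarrow> \<phi> dvd fs ! i - gs ! i"
  then obtain f1 f2 g1 g2 where fs: "fs = [f1, f2]" and gs: "gs = [g1, g2]"
    by (auto simp: numeral_2_eq_2 length_Suc_conv)
  have left: "\<phi> dvd dot (cross u F) (grad \<phi>)" for u
    using dvd_dot_right[OF assms, of u] by (simp add: dot_cross_cyclic)
  have right: "\<phi> dvd dot (cross F u) (grad \<phi>)" for u
    using left[of u] by (simp add: cross_anticommute[of F] dot_uminus_left)
  have "\<phi> dvd der2 F [f1, f2] - der2 F [g1, f2]"
    unfolding der2_pair_left using dot_grad_cong[OF left] cong[of 0] by (simp add: fs gs)
  moreover have "\<phi> dvd der2 F [g1, f2] - der2 F [g1, g2]"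
    unfolding der2_pair_right using dot_grad_cong[OF right] cong[of 1] by (simp add: fs gs)
  ultimately show "\<phi> dvd der2 F fs - der2 F gs"
    unfolding fs gs using dvd_add by fastforce
next
  fix fs :: "'a mpoly list" and i j :: nat
  assume "length fs = 2" "i < j" "j < 2"
  then obtain f1 f2 where "fs = [f1, f2]" "i = 0" "j = 1"
    by (auto simp: numeral_2_eq_2 length_Suc_conv)
  then show "\<phi> dvd der2 F (fs[i := fs ! j, j := fs ! i]) + der2 F fs"
    by (cases F) (simp add: der2_def dot_def cross_def grad_def algebra_simps)
qed

section \<open>Skew-symmetric derivations of degree 1, 2 and 3\<close>

lemma skew_derivation_1_eq_der1:
  assumes Q: "skew_derivation \<phi> 1 Q" and "length fs = 1"
  shows "\<phi> dvd Q fs - der1 (vec1 Q) fs"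
proof (rule multiderivation_mod_coordinates[OF _ _ \<open>length fs = 1\<close>])
  show "multiderivation_mod \<phi> 1 (\<lambda>fs. Q fs - der1 (vec1 Q) fs)"
    by (intro multiderivation_mod_diff skew_derivation_multiderivation_mod[OF Q] der1_multiderivation_mod)
  show "\<phi> dvd Q fs - der1 (vec1 Q) fs" if "length fs = 1" "set fs \<subseteq> {varX, varY, varZ}" for fs
    using that by (auto simp: length_Suc_conv vec1_def dot_def)
qed

lemma skew_derivation_2_eq_der2:
  fixes Q :: "'a::field_char_0 mpoly list \<Rightarrow> 'a mpoly"
  assumes Q: "skew_derivation \<phi> 2 Q" and "length fs = 2"
  shows "\<phi> dvd Q fs - der2 (vec2 Q) fs"
proof (rule multiderivation_mod_coordinates[OF _ _ \<open>length fs = 2\<close>])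
  show "multiderivation_mod \<phi> 2 (\<lambda>fs. Q fs - der2 (vec2 Q) fs)"
    by (intro multiderivation_mod_diff skew_derivation_multiderivation_mod[OF Q] der2_multiderivation_mod)
  have repeat: "\<phi> dvd Q [a, a]" for a
    using skew_derivation_repeat[OF Q, of "[a, a]" 0 1] by simp
  have swap: "\<phi> dvd Q [b, a] + Q [a, b]" for a b
    using skew_derivation_swap[OF Q, of "[a, b]" 0 1] by simp
  show "\<phi> dvd Q fs - der2 (vec2 Q) fs"
    if len: "length fs = 2" and coords: "set fs \<subseteq> {varX, varY, varZ}" for fs
  proof -
    obtain a b where "fs = [a, b]"
      using len by (auto simp: numeral_2_eq_2 length_Suc_conv)
    with coords show ?thesis
      using repeat swap by (auto simp: vec2_def der2_pair dot_def cross_def)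
  qed
qed

lemma skew_derivation_1_unique:
  assumes "skew_derivation \<phi> 1 Q" "skew_derivation \<phi> 1 Q'" "vin_ideal \<phi> (vec1 Q - vec1 Q')"
    and "length fs = 1"
  shows "\<phi> dvd Q fs - Q' fs"
proof -
  have "Q fs - Q' fs = (Q fs - der1 (vec1 Q) fs) - (Q' fs - der1 (vec1 Q') fs)
      + der1 (vec1 Q - vec1 Q') fs"
    by (simp flip: der1_diff)
  moreover have "\<phi> dvd der1 (vec1 Q - vec1 Q') fs"
    unfolding der1_def by (rule dvd_dot_right[OF assms(3)])
  ultimately show ?thesis
    using skew_derivation_1_eq_der1[OF assms(1,4)] skew_derivation_1_eq_der1[OF assms(2,4)]
    by (metis dvd_add dvd_diff)
qed

lemma skew_derivation_2_unique:
  fixes Q :: "'a::field_char_0 mpoly list \<Rightarrow> 'a mpoly"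
  assumes "skew_derivation \<phi> 2 Q" "skew_derivation \<phi> 2 Q'" "vin_ideal \<phi> (vec2 Q - vec2 Q')"
    and "length fs = 2"
  shows "\<phi> dvd Q fs - Q' fs"
proof -
  have "Q fs - Q' fs = (Q fs - der2 (vec2 Q) fs) - (Q' fs - der2 (vec2 Q') fs)
      + der2 (vec2 Q - vec2 Q') fs"
    by (simp flip: der2_diff)
  moreover have "\<phi> dvd der2 (vec2 Q - vec2 Q') fs"
    unfolding der2_def by (rule dvd_dot_right[OF assms(3)])
  ultimately show ?thesis
    using skew_derivation_2_eq_der2[OF assms(1,4)] skew_derivation_2_eq_der2[OF assms(2,4)]
    by (metis dvd_add dvd_diff)
qed

lemma skew_derivation_1_tangent:
  assumes "skew_derivation \<phi> 1 Q"
  shows "\<phi> dvd dot (vec1 Q) (grad \<phi>)"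
  using skew_derivation_grad_phi[OF assms, of "[0]" 0]
  by (simp add: vec1_def dot_def grad_def ac_simps)

lemma skew_derivation_2_tangent:
  fixes Q :: "'a::field_char_0 mpoly list \<Rightarrow> 'a mpoly"
  assumes Q: "skew_derivation \<phi> 2 Q"
  shows "vin_ideal \<phi> (cross (vec2 Q) (grad \<phi>))"
proof -
  have "\<phi> dvd der2 (vec2 Q) [\<phi>, v]" for v
    using skew_derivation_phi_arg[OF Q, of "[v, v]" 0] skew_derivation_2_eq_der2[OF Q, of "[\<phi>, v]"]
    by (simp add: dvd_diff_right_iff)
  from this[of varX] this[of varY] this[of varZ] show ?thesis
    by (cases "vec2 Q") (simp add: der2_pair_right dot_def cross_def grad_def)
qed

lemma skew_derivation_3_coordinates:
  fixes \<phi> :: "'a::field_char_0 mpoly"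
  assumes "\<phi> \<noteq> 0" "Asing_nonzero_findim \<phi>" and Q: "skew_derivation \<phi> 3 Q"
  shows "\<phi> dvd Q [varX, varY, varZ]"
proof -
  have rep01: "\<phi> dvd Q [a, a, c]" for a c
    using skew_derivation_repeat[OF Q, of "[a, a, c]" 0 1] by simp
  have rep02: "\<phi> dvd Q [a, b, a]" for a b
    using skew_derivation_repeat[OF Q, of "[a, b, a]" 0 2] by simp
  have rep12: "\<phi> dvd Q [a, b, b]" for a b
    using skew_derivation_repeat[OF Q, of "[a, b, b]" 1 2] by simp
  note slot = skew_derivation_grad_phi[OF Q, of "[varX, varY, varZ]"]
  have "\<phi> dvd dX \<phi> * Q [varX, varY, varZ]"
    using slot[of 0] rep01 rep02 by (simp add: dvd_add_left_iff dvd_add_right_iff)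
  moreover have "\<phi> dvd dY \<phi> * Q [varX, varY, varZ]"
    using slot[of 1] rep01 rep12 by (simp add: dvd_add_left_iff dvd_add_right_iff)
  moreover have "\<phi> dvd dZ \<phi> * Q [varX, varY, varZ]"
    using slot[of 2] rep02 rep12 by (simp add: dvd_add_left_iff dvd_add_right_iff)
  ultimately show ?thesis
    using dvd_of_dvd_partials_mult[OF assms(1,2)] by blast
qed

lemma skew_derivation_3_vanishes:
  fixes \<phi> :: "'a::field_char_0 mpoly"
  assumes "\<phi> \<noteq> 0" "Asing_nonzero_findim \<phi>" and Q: "skew_derivation \<phi> 3 Q" and "length fs = 3"
  shows "\<phi> dvd Q fs"
proof (rule multiderivation_mod_coordinates[OF skew_derivation_multiderivation_mod[OF Q] _ \<open>length fs = 3\<close>])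
  have rep01: "\<phi> dvd Q [a, a, c]" for a c
    using skew_derivation_repeat[OF Q, of "[a, a, c]" 0 1] by simp
  have rep02: "\<phi> dvd Q [a, b, a]" for a b
    using skew_derivation_repeat[OF Q, of "[a, b, a]" 0 2] by simp
  have rep12: "\<phi> dvd Q [a, b, b]" for a b
    using skew_derivation_repeat[OF Q, of "[a, b, b]" 1 2] by simp
  have swap01: "\<phi> dvd Q [b, a, c] \<longleftrightarrow> \<phi> dvd Q [a, b, c]" for a b c
    by (rule dvd_iff_dvd_of_dvd_add) (use skew_derivation_swap[OF Q, of "[a, b, c]" 0 1] in simp)
  have swap12: "\<phi> dvd Q [a, c, b] \<longleftrightarrow> \<phi> dvd Q [a, b, c]" for a b c
    by (rule dvd_iff_dvd_of_dvd_add) (use skew_derivation_swap[OF Q, of "[a, b, c]" 1 2] in simp)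
  have xyz: "\<phi> dvd Q [varX, varY, varZ]"
    by (rule skew_derivation_3_coordinates[OF assms(1-3)])
  have yxz: "\<phi> dvd Q [varY, varX, varZ]"
    using xyz swap01[of varX varY varZ] by blast
  have xzy: "\<phi> dvd Q [varX, varZ, varY]"
    using xyz swap12[of varX varY varZ] by blast
  have yzx: "\<phi> dvd Q [varY, varZ, varX]"
    using yxz swap12[of varY varX varZ] by blast
  have zxy: "\<phi> dvd Q [varZ, varX, varY]"
    using xzy swap01[of varX varZ varY] by blast
  have zyx: "\<phi> dvd Q [varZ, varY, varX]"
    using yzx swap01[of varY varZ varX] by blast
  show "\<phi> dvd Q gs" if len: "length gs = 3" and coords: "set gs \<subseteq> {varX, varY, varZ}" for gs
  proof -
    obtain a b c where "gs = [a, b, c]"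
      using len by (auto simp: numeral_3_eq_3 length_Suc_conv)
    with coords show ?thesis
      using rep01 rep02 rep12 xyz yxz xzy yzx zxy zyx by auto
  qed
qed

section \<open>The Poisson coboundary\<close>

lemma cobound_singleton: "cobound \<phi> Q [g] = pb \<phi> g (Q [])"
  by (simp add: cobound_def del_def)

lemma cobound_pair: "cobound \<phi> Q [g, h] = pb \<phi> g (Q [h]) - pb \<phi> h (Q [g]) - Q [pb \<phi> g h]"
  by (simp add: cobound_def del_def numeral_2_eq_2 lessThan_Suc algebra_simps)

lemma cobound_triple: "cobound \<phi> Q [g, h, k] = pb \<phi> g (Q [h, k]) - pb \<phi> h (Q [g, k]) + pb \<phi> k (Q [g, h])
     - Q [pb \<phi> g h, k] + Q [pb \<phi> g k, h] - Q [pb \<phi> h k, g]"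
  by (simp add: cobound_def del_def numeral_3_eq_3 lessThan_Suc algebra_simps)

lemma pb_diff_right: "pb \<phi> g (u - v) = pb \<phi> g u - pb \<phi> g v"
  by (simp add: pb_def dot_def cross_def grad_def partial_simps algebra_simps)

lemma pb_0_right [simp]: "pb \<phi> g 0 = 0"
  by (simp add: pb_def dot_def cross_def grad_def partial_simps)

text \<open>\<open>\<phi>\<close> is a Casimir: \<open>{g, \<phi> h} = \<phi> {g, h}\<close>.\<close>

lemma dvd_pb_right:
  assumes "\<phi> dvd u"
  shows "\<phi> dvd pb \<phi> g u"
proof -
  obtain h where "u = \<phi> * h"
    using assms ..
  moreover have "pb \<phi> g (\<phi> * h) = \<phi> * pb \<phi> g h"
    by (simp add: pb_def dot_def cross_def grad_def partial_simps algebra_simps)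
  ultimately show ?thesis
    by simp
qed

lemma length_del: "i < length xs \<Longrightarrow> length (del i xs) = length xs - 1"
  by (simp add: del_def)

lemma cobound_diff: "cobound \<phi> (\<lambda>fs. Q fs - Q' fs) fs = cobound \<phi> Q fs - cobound \<phi> Q' fs"
proof -
  have if_diff: "(if P then a - b else 0) = (if P then a else 0) - (if P then b else 0)"
    for P and a b :: "'a mpoly"
    by simp
  show ?thesis
    unfolding cobound_def
    by (simp add: pb_diff_right right_diff_distrib if_diff sum_subtractf cong: if_cong)
qed

lemma dvd_cobound:
  assumes "\<And>gs. length gs = k \<Longrightarrow> \<phi> dvd Q gs" and "length fs = Suc k"
  shows "\<phi> dvd cobound \<phi> Q fs"
proof -
  have "\<phi> dvd Q (del i fs)" if "i < length fs" for i
    using assms that by (simp add: length_del)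
  moreover have "\<phi> dvd Q (pb \<phi> (fs ! i) (fs ! j) # del i (del j fs))" if "i < j" "j < length fs" for i j
    using assms that by (simp add: length_del)
  ultimately show ?thesis
    unfolding cobound_def by (auto intro!: dvd_add dvd_sum dvd_mult dvd_pb_right)
qed

lemma cobound_cong:
  assumes "\<And>gs. length gs = k \<Longrightarrow> \<phi> dvd Q gs - Q' gs" and "length fs = Suc k"
  shows "\<phi> dvd cobound \<phi> Q fs - cobound \<phi> Q' fs"
  using dvd_cobound[of k \<phi> "\<lambda>fs. Q fs - Q' fs"] assms by (simp add: cobound_diff)

lemma cobound_add: "cobound \<phi> (\<lambda>fs. Q fs + Q' fs) fs = cobound \<phi> Q fs + cobound \<phi> Q' fs"
proof -
  have pb_add: "pb \<phi> g (u + v) = pb \<phi> g u + pb \<phi> g v" for g u v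
    by (simp add: pb_def dot_def cross_def grad_def partial_simps algebra_simps)
  have if_add: "(if P then a + b else 0) = (if P then a else 0) + (if P then b else 0)"
    for P and a b :: "'a mpoly"
    by simp
  show ?thesis
    unfolding cobound_def
    by (simp add: pb_add distrib_left if_add sum.distrib cong: if_cong)
qed

definition cobound_field :: "'a::idom mpoly \<Rightarrow> 'a vec3 \<Rightarrow> 'a vec3" where
  "cobound_field \<phi> F = - grad (dot F (grad \<phi>)) + vsmult (Div F) (grad \<phi>)"

lemma cobound_field_0 [simp]: "cobound_field \<phi> 0 = 0"
  by (simp add: cobound_field_def Div_def vsmult_def grad_def dot_def zero_prod_def partial_simps)

lemma cobound_der1: "cobound \<phi> (der1 F) [g, h] = der2 (cobound_field \<phi> F) [g, h]"
proof (cases F)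
  case (fields F1 F2 F3)
  show ?thesis
    unfolding cobound_pair der1_singleton der2_pair cobound_field_def fields
      pb_def dot_def cross_def grad_def Div_def vsmult_def
    by (simp add: partial_simps algebra_simps)
qed

definition curl :: "'a::idom vec3 \<Rightarrow> 'a vec3" where
  "curl F = (case F of (F1, F2, F3) \<Rightarrow> (dY F3 - dZ F2, dZ F1 - dX F3, dX F2 - dY F1))"

lemma curl_add: "curl (F + G) = curl F + curl G"
  by (cases F; cases G) (simp add: curl_def partial_simps)

text \<open>\<open>cobound \<phi> (der2 F)\<close> is linear in \<open>F\<close>; its closed form is verified for each coordinate axis
  separately, which keeps the polynomial normalisation small.\<close>

lemma cobound_der2_axes:
  "cobound \<phi> (der2 (F1, 0, 0)) [g, h, k]
     = - dot (grad g) (cross (grad h) (grad k)) * dot (grad \<phi>) (curl (F1, 0, 0))"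
  "cobound \<phi> (der2 (0, F2, 0)) [g, h, k]
     = - dot (grad g) (cross (grad h) (grad k)) * dot (grad \<phi>) (curl (0, F2, 0))"
  "cobound \<phi> (der2 (0, 0, F3)) [g, h, k]
     = - dot (grad g) (cross (grad h) (grad k)) * dot (grad \<phi>) (curl (0, 0, F3))"
  unfolding cobound_triple der2_pair curl_def pb_def dot_def cross_def grad_def
  by (simp_all add: partial_simps algebra_simps)

lemma cobound_der2:
  "cobound \<phi> (der2 F) [g, h, k] = - dot (grad g) (cross (grad h) (grad k)) * dot (grad \<phi>) (curl F)"
proof (cases F)
  case (fields F1 F2 F3)
  then have F: "F = (F1, 0, 0) + (0, F2, 0) + (0, 0, F3)"
    by simp
  then have "der2 F = (\<lambda>fs. der2 (F1, 0, 0) fs + der2 (0, F2, 0) fs + der2 (0, 0, F3) fs)"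
    by (intro ext) (simp only: der2_add)
  moreover have "curl F = curl (F1, 0, 0) + curl (0, F2, 0) + curl (0, 0, F3)"
    using F by (simp only: curl_add)
  ultimately show ?thesis
    by (simp only: cobound_add cobound_der2_axes dot_add_right) (simp add: algebra_simps)
qed

lemma Div_cross_grad: "Div (cross F (grad \<phi>)) = dot (grad \<phi>) (curl F)"
proof (cases F)
  case (fields F1 F2 F3)
  show ?thesis
    unfolding fields Div_def cross_def grad_def curl_def dot_def
    by (simp add: partial_simps algebra_simps)
qed

text \<open>Writing \<open>F \<times> \<nabla>\<phi> = \<phi> G\<close>, we get \<open>0 = \<nabla>\<phi> \<cdot> (F \<times> \<nabla>\<phi>) = \<phi> (\<nabla>\<phi> \<cdot> G)\<close>, hence
  \<open>\<nabla>\<phi> \<cdot> curl F = Div (\<phi> G) = \<nabla>\<phi> \<cdot> G + \<phi> Div G = \<phi> Div G\<close>.\<close>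

lemma dvd_grad_dot_curl:
  assumes "\<phi> \<noteq> 0" and "vin_ideal \<phi> (cross F (grad \<phi>))"
  shows "\<phi> dvd dot (grad \<phi>) (curl F)"
proof -
  obtain a b c where abc: "cross F (grad \<phi>) = (a, b, c)"
    by (cases "cross F (grad \<phi>)") blast
  with assms(2) have "\<phi> dvd a" "\<phi> dvd b" "\<phi> dvd c"
    by simp_all
  then obtain G1 G2 G3 where G: "cross F (grad \<phi>) = vsmult \<phi> (G1, G2, G3)"
    unfolding abc vsmult_def by (auto simp: dvd_def)
  have "dot (grad \<phi>) (cross F (grad \<phi>)) = 0"
    by (cases F) (simp add: dot_def cross_def grad_def algebra_simps)
  moreover have "dot (grad \<phi>) (vsmult \<phi> (G1, G2, G3)) = \<phi> * dot (grad \<phi>) (G1, G2, G3)"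
    by (simp add: vsmult_def dot_def grad_def algebra_simps)
  ultimately have "\<phi> * dot (grad \<phi>) (G1, G2, G3) = 0"
    by (simp only: G)
  with assms(1) have "dot (grad \<phi>) (G1, G2, G3) = 0"
    by simp
  moreover have "Div (vsmult \<phi> (G1, G2, G3)) = dot (grad \<phi>) (G1, G2, G3) + \<phi> * Div (G1, G2, G3)"
    by (simp add: Div_def vsmult_def dot_def grad_def partial_simps algebra_simps)
  ultimately show ?thesis
    by (simp flip: Div_cross_grad add: G)
qed

section \<open>Poisson cohomology\<close>

lemma all_lists_length_1: "(\<forall>xs. length xs = 1 \<longrightarrow> P xs) \<longleftrightarrow> (\<forall>a. P [a])"
  by (auto simp: length_Suc_conv)

lemma all_lists_length_2: "(\<forall>xs. length xs = 2 \<longrightarrow> P xs) \<longleftrightarrow> (\<forall>a b. P [a, b])"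
  by (auto simp: numeral_2_eq_2 length_Suc_conv)

lemma all_lists_length_3: "(\<forall>xs. length xs = 3 \<longrightarrow> P xs) \<longleftrightarrow> (\<forall>a b c. P [a, b, c])"
  by (auto simp: numeral_3_eq_3 length_Suc_conv)

lemma dvd_der1_iff: "(\<forall>g. \<phi> dvd der1 W [g]) \<longleftrightarrow> vin_ideal \<phi> W"
proof
  assume "\<forall>g. \<phi> dvd der1 W [g]"
  from this[rule_format, of varX] this[rule_format, of varY] this[rule_format, of varZ]
  show "vin_ideal \<phi> W"
    by (cases W) (simp add: dot_def)
qed (simp add: dvd_dot_right)

lemma dvd_der2_iff: "(\<forall>g h. \<phi> dvd der2 W [g, h]) \<longleftrightarrow> vin_ideal \<phi> W"
proof
  assume "\<forall>g h. \<phi> dvd der2 W [g, h]"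
  from this[rule_format, of varY varZ] this[rule_format, of varZ varX] this[rule_format, of varX varY]
  show "vin_ideal \<phi> W"
    by (cases W) (simp add: der2_pair dot_def cross_def)
qed (simp add: der2_def dvd_dot_right)

lemma cocycles_0_iff: "Q \<in> cocycles \<phi> 0 \<longleftrightarrow> vin_ideal \<phi> (cross (grad (Q [])) (grad \<phi>))"
proof -
  have "Q \<in> cocycles \<phi> 0 \<longleftrightarrow> (\<forall>g. \<phi> dvd der1 (cross (grad (Q [])) (grad \<phi>)) [g])"
    using all_lists_length_1[of "\<lambda>fs. \<phi> dvd cobound \<phi> Q fs"]
    by (simp add: cocycles_def in_ideal_iff_dvd cobound_singleton pb_def)
  then show ?thesis
    by (simp only: dvd_der1_iff)
qed

lemma cocycles_1_iff:
  assumes "skew_derivation \<phi> 1 Q"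
  shows "Q \<in> cocycles \<phi> 1 \<longleftrightarrow> vin_ideal \<phi> (cobound_field \<phi> (vec1 Q))"
proof -
  have "\<phi> dvd cobound \<phi> Q [g, h] \<longleftrightarrow> \<phi> dvd der2 (cobound_field \<phi> (vec1 Q)) [g, h]" for g h
    using dvd_iff_dvd_of_dvd_diff[OF cobound_cong[OF skew_derivation_1_eq_der1[OF assms], where fs="[g, h]"]]
    by (simp add: cobound_der1)
  then have "Q \<in> cocycles \<phi> 1 \<longleftrightarrow> (\<forall>g h. \<phi> dvd der2 (cobound_field \<phi> (vec1 Q)) [g, h])"
    using assms all_lists_length_2[of "\<lambda>fs. \<phi> dvd cobound \<phi> Q fs"]
    by (simp add: cocycles_def in_ideal_iff_dvd numeral_2_eq_2)
  then show ?thesis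
    by (simp only: dvd_der2_iff)
qed

lemma skew_derivation_2_cocycle:
  fixes Q :: "'a::field_char_0 mpoly list \<Rightarrow> 'a mpoly"
  assumes "\<phi> \<noteq> 0" and Q: "skew_derivation \<phi> 2 Q"
  shows "Q \<in> cocycles \<phi> 2"
proof -
  have "\<phi> dvd cobound \<phi> Q [g, h, k]" for g h k
  proof -
    have "\<phi> dvd cobound \<phi> (der2 (vec2 Q)) [g, h, k]"
      unfolding cobound_der2
      by (rule dvd_mult[OF dvd_grad_dot_curl[OF assms(1) skew_derivation_2_tangent[OF Q]]])
    then show ?thesis
      using dvd_iff_dvd_of_dvd_diff[OF cobound_cong[OF skew_derivation_2_eq_der2[OF Q], where fs="[g, h, k]"]]
      by simp
  qed
  with Q show ?thesis
    using all_lists_length_3[of "\<lambda>fs. \<phi> dvd cobound \<phi> Q fs"]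
    by (simp add: cocycles_def in_ideal_iff_dvd numeral_3_eq_3)
qed

lemma dvd_diff_cobound_1_iff:
  assumes Q: "skew_derivation \<phi> 1 Q"
  shows "(\<forall>fs. length fs = 1 \<longrightarrow> \<phi> dvd Q fs - cobound \<phi> P fs)
    \<longleftrightarrow> vin_ideal \<phi> (vec1 Q - cross (grad (P [])) (grad \<phi>))"
proof -
  have "\<phi> dvd Q [g] - cobound \<phi> P [g] \<longleftrightarrow> \<phi> dvd der1 (vec1 Q - cross (grad (P [])) (grad \<phi>)) [g]"
    for g
  proof (rule dvd_iff_dvd_of_dvd_diff)
    have "Q [g] - cobound \<phi> P [g] - der1 (vec1 Q - cross (grad (P [])) (grad \<phi>)) [g]
        = Q [g] - der1 (vec1 Q) [g]"
      by (simp add: cobound_singleton pb_def dot_diff_right)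
    then show "\<phi> dvd Q [g] - cobound \<phi> P [g] - der1 (vec1 Q - cross (grad (P [])) (grad \<phi>)) [g]"
      using skew_derivation_1_eq_der1[OF Q, of "[g]"] by (simp only:) simp
  qed
  then show ?thesis
    by (simp only: all_lists_length_1 dvd_der1_iff)
qed

lemma coboundaries_1_iff:
  assumes "skew_derivation \<phi> 1 Q"
  shows "Q \<in> coboundaries \<phi> 1 \<longleftrightarrow> (\<exists>p. vin_ideal \<phi> (vec1 Q - cross (grad p) (grad \<phi>)))"
proof -
  have "Q \<in> coboundaries \<phi> 1
      \<longleftrightarrow> (\<exists>P :: 'a mpoly list \<Rightarrow> 'a mpoly. vin_ideal \<phi> (vec1 Q - cross (grad (P [])) (grad \<phi>)))"
    using assms dvd_diff_cobound_1_iff[OF assms] by (simp add: coboundaries_def in_ideal_iff_dvd)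
  also have "\<dots> \<longleftrightarrow> (\<exists>p. vin_ideal \<phi> (vec1 Q - cross (grad p) (grad \<phi>)))"
  proof
    assume "\<exists>p. vin_ideal \<phi> (vec1 Q - cross (grad p) (grad \<phi>))"
    then obtain p where "vin_ideal \<phi> (vec1 Q - cross (grad p) (grad \<phi>))" ..
    then show "\<exists>P :: 'a mpoly list \<Rightarrow> 'a mpoly. vin_ideal \<phi> (vec1 Q - cross (grad (P [])) (grad \<phi>))"
      by (intro exI[of _ "\<lambda>_. p"])
  qed blast
  finally show ?thesis .
qed

lemma dvd_diff_cobound_2_iff:
  fixes Q :: "'a::field_char_0 mpoly list \<Rightarrow> 'a mpoly"
  assumes Q: "skew_derivation \<phi> 2 Q" and P: "skew_derivation \<phi> 1 P"
  shows "(\<forall>fs. length fs = 2 \<longrightarrow> \<phi> dvd Q fs - cobound \<phi> P fs)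
    \<longleftrightarrow> vin_ideal \<phi> (vec2 Q - cobound_field \<phi> (vec1 P))"
proof -
  have "\<phi> dvd Q [g, h] - cobound \<phi> P [g, h]
      \<longleftrightarrow> \<phi> dvd der2 (vec2 Q - cobound_field \<phi> (vec1 P)) [g, h]" for g h
  proof (rule dvd_iff_dvd_of_dvd_diff)
    have "Q [g, h] - cobound \<phi> P [g, h] - der2 (vec2 Q - cobound_field \<phi> (vec1 P)) [g, h]
        = (Q [g, h] - der2 (vec2 Q) [g, h]) - (cobound \<phi> P [g, h] - cobound \<phi> (der1 (vec1 P)) [g, h])"
      by (simp add: cobound_der1 algebra_simps flip: der2_diff)
    moreover have "\<phi> dvd Q [g, h] - der2 (vec2 Q) [g, h]"
      by (rule skew_derivation_2_eq_der2[OF Q]) simp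
    moreover have "\<phi> dvd cobound \<phi> P [g, h] - cobound \<phi> (der1 (vec1 P)) [g, h]"
      by (rule cobound_cong[of 1]) (simp_all add: skew_derivation_1_eq_der1[OF P])
    ultimately show "\<phi> dvd Q [g, h] - cobound \<phi> P [g, h] - der2 (vec2 Q - cobound_field \<phi> (vec1 P)) [g, h]"
      by (simp only: dvd_diff)
  qed
  then show ?thesis
    by (simp only: all_lists_length_2 dvd_der2_iff)
qed

lemma coboundaries_2_iff:
  fixes Q :: "'a::field_char_0 mpoly list \<Rightarrow> 'a mpoly"
  assumes Q: "skew_derivation \<phi> 2 Q"
  shows "Q \<in> coboundaries \<phi> 2
    \<longleftrightarrow> (\<exists>F. \<phi> dvd dot F (grad \<phi>) \<and> vin_ideal \<phi> (vec2 Q - cobound_field \<phi> F))"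
proof -
  have "Q \<in> coboundaries \<phi> 2
      \<longleftrightarrow> (\<exists>P. skew_derivation \<phi> 1 P \<and> vin_ideal \<phi> (vec2 Q - cobound_field \<phi> (vec1 P)))"
    using Q dvd_diff_cobound_2_iff[OF Q] by (auto simp: coboundaries_def in_ideal_iff_dvd)
  also have "\<dots> \<longleftrightarrow> (\<exists>F. \<phi> dvd dot F (grad \<phi>) \<and> vin_ideal \<phi> (vec2 Q - cobound_field \<phi> F))"
  proof
    assume "\<exists>F. \<phi> dvd dot F (grad \<phi>) \<and> vin_ideal \<phi> (vec2 Q - cobound_field \<phi> F)"
    then obtain F where "\<phi> dvd dot F (grad \<phi>)" "vin_ideal \<phi> (vec2 Q - cobound_field \<phi> F)"
      by blast
    then show "\<exists>P. skew_derivation \<phi> 1 P \<and> vin_ideal \<phi> (vec2 Q - cobound_field \<phi> (vec1 P))"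
      by (intro exI[of _ "der1 F"] conjI skew_derivation_der1) simp_all
  qed (use skew_derivation_1_tangent in blast)
  finally show ?thesis .
qed

lemma quot_isoI:
  assumes "\<And>z. z \<in> Z \<Longrightarrow> \<Phi> z \<in> V"
    and "\<And>z1 z2. \<Phi> (z1 + z2) = \<Phi> z1 + \<Phi> z2"
    and "\<And>c z. \<Phi> (smZ c z) = smV c (\<Phi> z)"
    and "0 \<in> W"
    and "\<And>v. v \<in> V \<Longrightarrow> \<exists>z\<in>Z. v - \<Phi> z \<in> W"
    and "\<And>z. z \<in> Z \<Longrightarrow> \<Phi> z \<in> W \<longleftrightarrow> z \<in> B"
  shows "quot_iso Z B smZ V W smV"
  unfolding quot_iso_def by (intro exI[of _ \<Phi>] conjI ballI allI) (simp_all add: assms)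

lemma H0_iso:
  "quot_iso (cocycles \<phi> 0) (coboundaries \<phi> 0) cochain_smult
     {g. \<exists>f. vin_ideal \<phi> (cross (grad f) (grad \<phi>)) \<and> \<phi> dvd g - f} {g. \<phi> dvd g}
     (\<lambda>c g. mconst c * g)"
proof (rule quot_isoI[where \<Phi> = "\<lambda>Q. Q []"])
  show "Q [] \<in> {g. \<exists>f. vin_ideal \<phi> (cross (grad f) (grad \<phi>)) \<and> \<phi> dvd g - f}"
    if "Q \<in> cocycles \<phi> 0" for Q
    using that by (auto simp: cocycles_0_iff)
  show "\<exists>Q\<in>cocycles \<phi> 0. v - Q [] \<in> {g. \<phi> dvd g}"
    if "v \<in> {g. \<exists>f. vin_ideal \<phi> (cross (grad f) (grad \<phi>)) \<and> \<phi> dvd g - f}" for v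
  proof -
    from that obtain f where "vin_ideal \<phi> (cross (grad f) (grad \<phi>))" "\<phi> dvd v - f"
      by blast
    then show ?thesis
      by (intro bexI[of _ "\<lambda>_. f"]) (simp_all add: cocycles_0_iff)
  qed
  show "Q [] \<in> {g. \<phi> dvd g} \<longleftrightarrow> Q \<in> coboundaries \<phi> 0" for Q
    by (simp add: coboundaries_def in_ideal_iff_dvd)
qed (simp_all add: cochain_smult_def)

lemma H1_iso:
  "quot_iso (cocycles \<phi> 1) (coboundaries \<phi> 1) cochain_smult
     {g. \<exists>f. \<phi> dvd dot f (grad \<phi>) \<and> vin_ideal \<phi> (cobound_field \<phi> f) \<and> vin_ideal \<phi> (g - f)}
     {g. \<exists>f. vin_ideal \<phi> (g - cross (grad f) (grad \<phi>))}
     (\<lambda>c g. vsmult (mconst c) g)"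
proof (rule quot_isoI[where \<Phi> = vec1])
  show "vec1 Q \<in> {g. \<exists>f. \<phi> dvd dot f (grad \<phi>) \<and> vin_ideal \<phi> (cobound_field \<phi> f) \<and> vin_ideal \<phi> (g - f)}"
    if "Q \<in> cocycles \<phi> 1" for Q
  proof -
    have Q: "skew_derivation \<phi> 1 Q"
      using that by (simp add: cocycles_def)
    have "\<phi> dvd dot (vec1 Q) (grad \<phi>)"
      by (rule skew_derivation_1_tangent[OF Q])
    moreover have "vin_ideal \<phi> (cobound_field \<phi> (vec1 Q))"
      using that cocycles_1_iff[OF Q] by blast
    ultimately show ?thesis
      by (intro CollectI exI[of _ "vec1 Q"]) simp
  qed
  show "\<exists>Q\<in>cocycles \<phi> 1. v - vec1 Q \<in> {g. \<exists>f. vin_ideal \<phi> (g - cross (grad f) (grad \<phi>))}"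
    if "v \<in> {g. \<exists>f. \<phi> dvd dot f (grad \<phi>) \<and> vin_ideal \<phi> (cobound_field \<phi> f) \<and> vin_ideal \<phi> (g - f)}"
    for v
  proof -
    from that obtain f where f: "\<phi> dvd dot f (grad \<phi>)" "vin_ideal \<phi> (cobound_field \<phi> f)"
        "vin_ideal \<phi> (v - f)"
      by blast
    then have "der1 f \<in> cocycles \<phi> 1"
      using cocycles_1_iff[OF skew_derivation_der1[OF f(1)]] by simp
    moreover have "v - vec1 (der1 f) \<in> {g. \<exists>f. vin_ideal \<phi> (g - cross (grad f) (grad \<phi>))}"
      using f(3) by (intro CollectI exI[of _ 0]) simp
    ultimately show ?thesis
      by blast
  qed
  show "vec1 Q \<in> {g. \<exists>f. vin_ideal \<phi> (g - cross (grad f) (grad \<phi>))} \<longleftrightarrow> Q \<in> coboundaries \<phi> 1"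
    if "Q \<in> cocycles \<phi> 1" for Q
    using that coboundaries_1_iff[of \<phi> Q] unfolding cocycles_def by blast
qed (simp_all del: split_paired_Ex add: vec1_def cochain_smult_def vsmult_def exI[of _ 0])

lemma H2_iso:
  fixes \<phi> :: "'a::field_char_0 mpoly"
  assumes "\<phi> \<noteq> 0"
  shows "quot_iso (cocycles \<phi> 2) (coboundaries \<phi> 2) cochain_smult
     {g. \<exists>f. vin_ideal \<phi> (cross f (grad \<phi>)) \<and> vin_ideal \<phi> (g - f)}
     {g. \<exists>f. \<phi> dvd dot f (grad \<phi>) \<and> vin_ideal \<phi> (g - cobound_field \<phi> f)}
     (\<lambda>c g. vsmult (mconst c) g)"
proof (rule quot_isoI[where \<Phi> = vec2])
  show "vec2 Q \<in> {g. \<exists>f. vin_ideal \<phi> (cross f (grad \<phi>)) \<and> vin_ideal \<phi> (g - f)}"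
    if "Q \<in> cocycles \<phi> 2" for Q
    using that skew_derivation_2_tangent by (fastforce simp: cocycles_def)
  show "\<exists>Q\<in>cocycles \<phi> 2. v - vec2 Q \<in> {g. \<exists>f. \<phi> dvd dot f (grad \<phi>) \<and> vin_ideal \<phi> (g - cobound_field \<phi> f)}"
    if "v \<in> {g. \<exists>f. vin_ideal \<phi> (cross f (grad \<phi>)) \<and> vin_ideal \<phi> (g - f)}" for v
  proof -
    from that obtain f where f: "vin_ideal \<phi> (cross f (grad \<phi>))" "vin_ideal \<phi> (v - f)"
      by blast
    then have "der2 f \<in> cocycles \<phi> 2"
      using skew_derivation_2_cocycle[OF assms skew_derivation_der2] by blast
    moreover have "v - vec2 (der2 f)
        \<in> {g. \<exists>f. \<phi> dvd dot f (grad \<phi>) \<and> vin_ideal \<phi> (g - cobound_field \<phi> f)}"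
      using f(2) by (intro CollectI exI[of _ 0]) simp
    ultimately show ?thesis
      by blast
  qed
  show "vec2 Q \<in> {g. \<exists>f. \<phi> dvd dot f (grad \<phi>) \<and> vin_ideal \<phi> (g - cobound_field \<phi> f)}
      \<longleftrightarrow> Q \<in> coboundaries \<phi> 2"
    if "Q \<in> cocycles \<phi> 2" for Q
    using that coboundaries_2_iff[of \<phi> Q] unfolding cocycles_def by blast
qed (simp_all del: split_paired_Ex add: vec2_def cochain_smult_def vsmult_def exI[of _ 0])

lemma cocycles_3_subset_coboundaries:
  fixes \<phi> :: "'a::field_char_0 mpoly"
  assumes "\<phi> \<noteq> 0" "Asing_nonzero_findim \<phi>"
  shows "cocycles \<phi> 3 \<subseteq> coboundaries \<phi> 3"
proof
  fix Q
  assume "Q \<in> cocycles \<phi> 3"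
  then have Q: "skew_derivation \<phi> 3 Q"
    by (simp add: cocycles_def)
  have "skew_derivation \<phi> 2 (\<lambda>_. 0)"
    by (simp add: skew_derivation_def in_ideal_iff_dvd)
  moreover have "cobound \<phi> (\<lambda>_. 0) fs = 0" for fs
    by (simp add: cobound_def cong: if_cong)
  ultimately show "Q \<in> coboundaries \<phi> 3"
    using Q skew_derivation_3_vanishes[OF assms Q]
    by (auto simp: coboundaries_def in_ideal_iff_dvd intro!: exI[of _ "\<lambda>_. 0"])
qed

theorem mainTheorem8:
  fixes \<phi> :: "'a::field_char_0 mpoly" and w1 w2 w3 :: nat
  assumes "w1 > 0" and "w2 > 0" and "w3 > 0" and "gcd w1 (gcd w2 w3) = 1"
    and "whis w1 w2 w3 \<phi>"
  shows
    \<comment> \<open>every skew-symmetric 3-derivation is zero, hence H^3 = 0\<close>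
    "(\<forall>Q. skew_derivation \<phi> 3 Q \<longrightarrow> (\<forall>fs. length fs = 3 \<longrightarrow> in_ideal \<phi> (Q fs)))
   \<and> cocycles \<phi> 3 \<subseteq> coboundaries \<phi> 3
    \<comment> \<open>1-derivations identified with pi{f | f.grad phi in <phi>}\<close>
   \<and> (\<forall>Q. skew_derivation \<phi> 1 Q \<longrightarrow>
        (\<exists>f. in_ideal \<phi> (dot f (grad \<phi>)) \<and> vin_ideal \<phi> ((Q [varX], Q [varY], Q [varZ]) - f)))
   \<and> (\<forall>f. in_ideal \<phi> (dot f (grad \<phi>)) \<longrightarrow>
        (\<exists>Q. skew_derivation \<phi> 1 Q \<and> vin_ideal \<phi> ((Q [varX], Q [varY], Q [varZ]) - f)))
   \<and> (\<forall>Q Q'. skew_derivation \<phi> 1 Q \<longrightarrow> skew_derivation \<phi> 1 Q' \<longrightarrow>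
        vin_ideal \<phi> ((Q [varX], Q [varY], Q [varZ]) - (Q' [varX], Q' [varY], Q' [varZ])) \<longrightarrow>
        (\<forall>fs. length fs = 1 \<longrightarrow> in_ideal \<phi> (Q fs - Q' fs)))
    \<comment> \<open>2-derivations identified with pi{f | f x grad phi in <phi>}\<close>
   \<and> (\<forall>Q. skew_derivation \<phi> 2 Q \<longrightarrow>
        (\<exists>f. vin_ideal \<phi> (cross f (grad \<phi>)) \<and>
             vin_ideal \<phi> ((Q [varY, varZ], Q [varZ, varX], Q [varX, varY]) - f)))
   \<and> (\<forall>f. vin_ideal \<phi> (cross f (grad \<phi>)) \<longrightarrow>
        (\<exists>Q. skew_derivation \<phi> 2 Q \<and>
             vin_ideal \<phi> ((Q [varY, varZ], Q [varZ, varX], Q [varX, varY]) - f)))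
   \<and> (\<forall>Q Q'. skew_derivation \<phi> 2 Q \<longrightarrow> skew_derivation \<phi> 2 Q' \<longrightarrow>
        vin_ideal \<phi> ((Q [varY, varZ], Q [varZ, varX], Q [varX, varY])
                      - (Q' [varY, varZ], Q' [varZ, varX], Q' [varX, varY])) \<longrightarrow>
        (\<forall>fs. length fs = 2 \<longrightarrow> in_ideal \<phi> (Q fs - Q' fs)))
    \<comment> \<open>H^0\<close>
   \<and> quot_iso (cocycles \<phi> 0) (coboundaries \<phi> 0) cochain_smult
        {g. \<exists>f. vin_ideal \<phi> (cross (grad f) (grad \<phi>)) \<and> in_ideal \<phi> (g - f)}
        {g. in_ideal \<phi> g}
        (\<lambda>c g. mconst c * g)
    \<comment> \<open>H^1\<close>
   \<and> quot_iso (cocycles \<phi> 1) (coboundaries \<phi> 1) cochain_smult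
        {g. \<exists>f. in_ideal \<phi> (dot f (grad \<phi>)) \<and>
               vin_ideal \<phi> (- grad (dot f (grad \<phi>)) + vsmult (Div f) (grad \<phi>)) \<and>
               vin_ideal \<phi> (g - f)}
        {g. \<exists>f. vin_ideal \<phi> (g - cross (grad f) (grad \<phi>))}
        (\<lambda>c g. vsmult (mconst c) g)
    \<comment> \<open>H^2\<close>
   \<and> quot_iso (cocycles \<phi> 2) (coboundaries \<phi> 2) cochain_smult
        {g. \<exists>f. vin_ideal \<phi> (cross f (grad \<phi>)) \<and> vin_ideal \<phi> (g - f)}
        {g. \<exists>f. in_ideal \<phi> (dot f (grad \<phi>)) \<and>
               vin_ideal \<phi> (g - (- grad (dot f (grad \<phi>)) + vsmult (Div f) (grad \<phi>)))}
        (\<lambda>c g. vsmult (mconst c) g)"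
proof -
  from assms(5) have "\<phi> \<noteq> 0" and findim: "Asing_nonzero_findim \<phi>"
    by (auto simp: whis_def weight_homogeneous_def)
  show ?thesis
    unfolding in_ideal_iff_dvd vec1_def[symmetric] vec2_def[symmetric] cobound_field_def[symmetric]
    apply (intro conjI)
    subgoal using skew_derivation_3_vanishes[OF \<open>\<phi> \<noteq> 0\<close> findim] by blast
    subgoal by (rule cocycles_3_subset_coboundaries[OF \<open>\<phi> \<noteq> 0\<close> findim])
    subgoal using skew_derivation_1_tangent by (metis diff_self vin_ideal_0)
    subgoal using skew_derivation_der1 by (metis vec1_der1 diff_self vin_ideal_0)
    subgoal using skew_derivation_1_unique by blast
    subgoal using skew_derivation_2_tangent by (metis diff_self vin_ideal_0)
    subgoal using skew_derivation_der2 by (metis vec2_der2 diff_self vin_ideal_0)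
    subgoal using skew_derivation_2_unique by blast
    subgoal by (rule H0_iso)
    subgoal by (rule H1_iso)
    subgoal by (rule H2_iso[OF \<open>\<phi> \<noteq> 0\<close>])
    done
qed

end
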